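(* Let $\Lambda=\sum_{i=0}^{N-1}a_i\Lambda_i\in P_N^+(L)$ with $\sum_{i=1}^{N-1}i\,a_i\equiv M\pmod N$, and let $k_1>k_2>\cdots$ be the sequence with $\psi_\Lambda=u_{k_1}\wedge u_{k_2}\wedge\cdots$. Then for all indices $l>m$ there are coefficients $c_{\alpha,k_{l'}}\in\mathbb K$ such that in $\wedge^2V_{\mathrm{aff}}$ $$u_{k_l}\wedge u_{k_m}=\sum_{l'}c_{\alpha,k_{l'}}\,u_\alpha\wedge u_{k_{l'}},$$ where in every term $\alpha>k_{l'}\ge k_l$ (i.e. the second momentum in every term is again a member $k_{l'}$ of the sequence, with $k_{l'}\ge k_l$).
   Context: Let $N,L\ge 2$ be integers, $q$ an indeterminate and $\mathbb K=\mathbb Q(q^{1/(2N)})$. Let $\mathbb K^L$ have basis $\mathfrak e_1,\dots,\mathfrak e_L$, $\mathbb K^N$ have basis $\mathfrak v_1,\dots,\mathfrak v_N$, and $V_{\mathrm{aff}}=\mathbb K[z^{\pm1}]\otimes\mathbb K^L\otimes\mathbb K^N$. Identify $V_{\mathrm{aff}}^{\otimes n}=\mathbb K[z_1^{\pm1},\dots,z_n^{\pm1}]\otimes(\mathbb K^L)^{\otimes n}\otimes(\mathbb K^N)^{\otimes n}$. With $E_{a,b}$ the matrix units of $\mathbb K^L$ put $R(z_1,z_2)=(q^2z_1-z_2)\sum_{a}E_{a,a}\otimes E_{a,a}+q(z_1-z_2)\sum_{a\neq b}E_{a,a}\otimes E_{b,b}+z_1(q^2-1)\sum_{a<b}E_{a,b}\otimes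 E_{b,a}+z_2(q^2-1)\sum_{a>b}E_{a,b}\otimes E_{b,a}$, $s$ the exchange of the two factors of $(\mathbb K[z^{\pm1}]\otimes\mathbb K^L)^{\otimes 2}$, $\overset{c}{T}=\frac{z_1-q^2z_2}{z_1-z_2}\bigl(1-s\cdot\frac{R(z_1,z_2)}{q^2z_1-z_2}\bigr)-1$, and $\overset{s}{T}$ on $(\mathbb K^N)^{\otimes 2}$: $\mathfrak v_{\epsilon_1}\otimes\mathfrak v_{\epsilon_2}\mapsto q^2\mathfrak v_{\epsilon_1}\otimes\mathfrak v_{\epsilon_2}$ if $\epsilon_1=\epsilon_2$, $q\,\mathfrak v_{\epsilon_2}\otimes\mathfrak v_{\epsilon_1}$ if $\epsilon_1<\epsilon_2$, $q\,\mathfrak v_{\epsilon_2}\otimes\mathfrak v_{\epsilon_1}+(q^2-1)\mathfrak v_{\epsilon_1}\otimes\mathfrak v_{\epsilon_2}$ if $\epsilon_1>\epsilon_2$; $\overset{c}{T}_i,\overset{s}{T}_i$ act in factors $i,i+1$. $\wedge^nV_{\mathrm{aff}}=V_{\mathrm{aff}}^{\otimes n}/\sum_{i}\mathrm{Im}(\overset{c}{T}_i-\overset{s}{T}_i)$. Write $k=\bar k-N(\dot k+L\underline k)$ ($\bar k\in\{1..N\}$, $\dot k\in\{1..L\}$, $\underline k\in\mathbb Z$), $u_k=z^{\underline k}\mathfrak e_{\dot k}\mathfrak v_{\bar k}$; $u_{k_1}\wedge\cdots\wedge u_{k_n}$ is the image of $u_{k_1}\otimes\cdots\otimes u_{k_n}$.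 The Fock space $\mathcal F_M$ is the inductive limit of $\wedge^nV_{\mathrm{aff}}$ along $v\mapsto v\wedge u_{M-n}$, with vacuum $|M\rangle=u_M\wedge u_{M-1}\wedge\cdots$. Weights: $\Lambda_0,\dots,\Lambda_{N-1}$ are the fundamental weights of $\widehat{\mathfrak{sl}}_N$; $P_N^+(L)=\{\sum_{i=0}^{N-1}a_i\Lambda_i: a_i\in\mathbb Z_{\ge0},\sum a_i=L\}$. The vector $\psi_\Lambda$: let $s\in\{0,\dots,NL-1\}$ with $M\equiv s\pmod{NL}$, and let $l_1\ge l_2\ge\cdots\ge l_N$ be the integers with $l_i-l_{i+1}=a_i$ ($1\le i<N$) and $l_1+\cdots+l_N=s+NL$ (then $l_N>0$). Consider the Young diagram with column $x$ ($1\le x\le N$) consisting of boxes $(x,y)$, $1\le y\le l_x$. Number its $s+NL$ boxes $1,\dots,s+NL$ so that rows are numbered from the top row downwards (every box of a lower row gets a larger number than every box of a higher row) and within a row numbers increase from right to left. If box number $i$ is $(x_i,y_i)$, put $k_i=x_i+N(y_i-L-1)+M-s$; then $k_1>\cdots>k_{s+NL}$, and $\psi_\Lambda=u_{k_1}\wedge\cdots\wedge u_{k_{s+NL}}\wedge|M-s-NL\rangle\in\mathcal F_M$; set $k_i=M-i+1$ for $i>s+NL$. *)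

theory Defs
  imports "HOL-Computational_Algebra.Polynomial" "HOL-Computational_Algebra.Fraction_Field"
begin

(* The field K = Q(q^(1/(2N))) is modelled as Q(t) = rat poly fract, t = q^(1/(2N)),
   so q = t^(2N). *)
type_synonym K = "rat poly fract"

definition tvar :: K where "tvar = Fract [:0, 1:] 1"
definition qq :: "nat \<Rightarrow> K" where "qq N = tvar ^ (2 * N)"

(* Decomposition k = bar k - N (dot k + L * under k), bar in {1..N}, dot in {1..L} *)
definition kbar :: "nat \<Rightarrow> int \<Rightarrow> int" where
  "kbar N k = (k - 1) mod int N + 1"
definition kt :: "nat \<Rightarrow> int \<Rightarrow> int" where
  "kt N k = (kbar N k - k) div int N"
definition kdot :: "nat \<Rightarrow> nat \<Rightarrow> int \<Rightarrow> int" where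
  "kdot N L k = (kt N k - 1) mod int L + 1"
definition kunder :: "nat \<Rightarrow> nat \<Rightarrow> int \<Rightarrow> int" where
  "kunder N L k = (kt N k - kdot N L k) div int L"
definition mkk :: "nat \<Rightarrow> nat \<Rightarrow> int \<Rightarrow> int \<Rightarrow> int \<Rightarrow> int" where
  "mkk N L b d u = b - int N * (d + int L * u)"

(* Elements of V_aff^{(x)2}: coefficient functions w.r.t. the basis
   u_{k1} (x) u_{k2}, (k1,k2) in Z^2, with finite support. *)
type_synonym vec = "int \<times> int \<Rightarrow> K"

definition fsupp :: "vec \<Rightarrow> bool" where "fsupp f \<longleftrightarrow> finite {p. f p \<noteq> 0}"
definition bv :: "int \<times> int \<Rightarrow> vec" where "bv p = (\<lambda>x. if x = p then 1 else 0)"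
definition vadd :: "vec \<Rightarrow> vec \<Rightarrow> vec" where "vadd f g = (\<lambda>x. f x + g x)"
definition vsub :: "vec \<Rightarrow> vec \<Rightarrow> vec" where "vsub f g = (\<lambda>x. f x - g x)"
definition vsc :: "K \<Rightarrow> vec \<Rightarrow> vec" where "vsc c f = (\<lambda>x. c * f x)"

definition lin :: "(int \<times> int \<Rightarrow> vec) \<Rightarrow> vec \<Rightarrow> vec" where
  "lin F f = (\<lambda>x. \<Sum>p\<in>{p. f p \<noteq> 0}. f p * F p x)"

(* multiplication by z1, z2 : raising the z-exponent by one lowers k by N L *)
definition z1b :: "nat \<Rightarrow> nat \<Rightarrow> int \<times> int \<Rightarrow> vec" where
  "z1b N L p = bv (fst p - int N * int L, snd p)"
definition z2b :: "nat \<Rightarrow> nat \<Rightarrow> int \<times> int \<Rightarrow> vec" where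
  "z2b N L p = bv (fst p, snd p - int N * int L)"
definition Z1 :: "nat \<Rightarrow> nat \<Rightarrow> vec \<Rightarrow> vec" where "Z1 N L = lin (z1b N L)"
definition Z2 :: "nat \<Rightarrow> nat \<Rightarrow> vec \<Rightarrow> vec" where "Z2 N L = lin (z2b N L)"

(* exchange of the e-parts only (used to describe R) *)
definition swapdot :: "nat \<Rightarrow> nat \<Rightarrow> int \<times> int \<Rightarrow> int \<times> int" where
  "swapdot N L p = (mkk N L (kbar N (fst p)) (kdot N L (snd p)) (kunder N L (fst p)),
                    mkk N L (kbar N (snd p)) (kdot N L (fst p)) (kunder N L (snd p)))"
(* s: exchange of the (z,e)-parts of the two factors (v-parts stay) *)
definition swapZE :: "nat \<Rightarrow> nat \<Rightarrow> int \<times> int \<Rightarrow> int \<times> int" where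
  "swapZE N L p = (mkk N L (kbar N (fst p)) (kdot N L (snd p)) (kunder N L (snd p)),
                   mkk N L (kbar N (snd p)) (kdot N L (fst p)) (kunder N L (fst p)))"
(* exchange of the v-parts (used for sT) *)
definition swapbar :: "nat \<Rightarrow> nat \<Rightarrow> int \<times> int \<Rightarrow> int \<times> int" where
  "swapbar N L p = (mkk N L (kbar N (snd p)) (kdot N L (fst p)) (kunder N L (fst p)),
                    mkk N L (kbar N (fst p)) (kdot N L (snd p)) (kunder N L (snd p)))"

(* R(z1,z2) on basis vectors z1^m1 z2^m2 e_a(x)e_b (x) v(x)v *)
definition Rb :: "nat \<Rightarrow> nat \<Rightarrow> int \<times> int \<Rightarrow> vec" where
  "Rb N L p = (let a = kdot N L (fst p); b = kdot N L (snd p); q = qq N in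
     if a = b then vsub (vsc (q^2) (z1b N L p)) (z2b N L p)
     else vadd (vsc q (vsub (z1b N L p) (z2b N L p)))
               (vsc (q^2 - 1) (if a > b then z1b N L (swapdot N L p) else z2b N L (swapdot N L p))))"
definition RR :: "nat \<Rightarrow> nat \<Rightarrow> vec \<Rightarrow> vec" where "RR N L = lin (Rb N L)"
definition SS :: "nat \<Rightarrow> nat \<Rightarrow> vec \<Rightarrow> vec" where "SS N L = lin (\<lambda>p. bv (swapZE N L p))"

(* cT f = g  iff  g + f = (z1-q^2 z2)/(z1-z2) (f - s(R f / (q^2 z1 - z2))),
   i.e. (s is the variable exchange, so s(q^2 z1 - z2) = q^2 z2 - z1), after clearing
   denominators:
   (z1-z2)(q^2 z2 - z1)(g+f) = (z1 - q^2 z2)((q^2 z2 - z1) f - s(R f)). *)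
definition cT :: "nat \<Rightarrow> nat \<Rightarrow> vec \<Rightarrow> vec" where
  "cT N L f = (THE g. fsupp g \<and>
     (let q = qq N;
          mD1 = (\<lambda>h. vsub (Z1 N L h) (Z2 N L h));
          msD2 = (\<lambda>h. vsub (vsc (q^2) (Z2 N L h)) (Z1 N L h));
          mP = (\<lambda>h. vsub (Z1 N L h) (vsc (q^2) (Z2 N L h)))
      in mD1 (msD2 (vadd g f)) = mP (vsub (msD2 f) (SS N L (RR N L f)))))"

(* sT on the (K^N)^{(x)2} part *)
definition sTb :: "nat \<Rightarrow> nat \<Rightarrow> int \<times> int \<Rightarrow> vec" where
  "sTb N L p = (let e1 = kbar N (fst p); e2 = kbar N (snd p); q = qq N in
     if e1 = e2 then vsc (q^2) (bv p)
     else if e1 < e2 then vsc q (bv (swapbar N L p))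
     else vadd (vsc q (bv (swapbar N L p))) (vsc (q^2 - 1) (bv p)))"
definition sT :: "nat \<Rightarrow> nat \<Rightarrow> vec \<Rightarrow> vec" where "sT N L = lin (sTb N L)"

(* the relation subspace Im(cT - sT) in V_aff^{(x)2}; wedge^2 V_aff is the quotient *)
definition relIm :: "nat \<Rightarrow> nat \<Rightarrow> vec set" where
  "relIm N L = {vsub (cT N L g) (sT N L g) | g. fsupp g}"

definition sres :: "nat \<Rightarrow> nat \<Rightarrow> int \<Rightarrow> int" where "sres N L M = M mod (int N * int L)"
definition lN :: "nat \<Rightarrow> nat \<Rightarrow> int \<Rightarrow> (nat \<Rightarrow> nat) \<Rightarrow> int" where
  "lN N L M a = (sres N L M + int N * int L - (\<Sum>j=1..<N. int (j * a j))) div int N"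
definition lcol :: "nat \<Rightarrow> nat \<Rightarrow> int \<Rightarrow> (nat \<Rightarrow> nat) \<Rightarrow> int \<Rightarrow> int" where
  "lcol N L M a x = lN N L M a + (\<Sum>j\<in>{nat x..<N}. int (a j))"
definition boxes :: "nat \<Rightarrow> nat \<Rightarrow> int \<Rightarrow> (nat \<Rightarrow> nat) \<Rightarrow> (int \<times> int) set" where
  "boxes N L M a = {(x, y). 1 \<le> x \<and> x \<le> int N \<and> 1 \<le> y \<and> y \<le> lcol N L M a x}"
definition boxnum :: "nat \<Rightarrow> nat \<Rightarrow> int \<Rightarrow> (nat \<Rightarrow> nat) \<Rightarrow> int \<times> int \<Rightarrow> nat" where
  "boxnum N L M a b = card {b' \<in> boxes N L M a. snd b' > snd b}
                    + card {b' \<in> boxes N L M a. snd b' = snd b \<and> fst b' > fst b} + 1"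
definition kseq :: "nat \<Rightarrow> nat \<Rightarrow> int \<Rightarrow> (nat \<Rightarrow> nat) \<Rightarrow> nat \<Rightarrow> int" where
  "kseq N L M a i = (if int i \<le> sres N L M + int N * int L
     then (let b = (THE b. b \<in> boxes N L M a \<and> boxnum N L M a b = i)
           in fst b + int N * (snd b - int L - 1) + M - sres N L M)
     else M - int i + 1)"

end

theory Submission
  imports Defs
begin

text \<open>Write an index as \<open>k = kbar k - N kt k\<close> with colour \<open>kbar k\<close> and level \<open>kt k\<close>;
  multiplication by \<open>z\<^sub>i\<close> raises the \<open>i\<close>-th level by \<open>L\<close>. Clearing denominators, the
  relation defining \<open>cT f\<close> becomes a division by \<open>z\<^sub>1 - z\<^sub>2\<close>. For a basis vector
  \<open>u\<^sub>k\<^sub>1 \<otimes> u\<^sub>k\<^sub>2\<close> the quotient is supported on the antidiagonal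
  \<open>Y\<^sub>1 + Y\<^sub>2 = kt k\<^sub>1 + kt k\<^sub>2\<close>, between the two levels, so each relation
  \<open>cT - sT\<close> rewrites an unordered pair as a combination of ordered pairs and of pairs with a
  smaller level difference, all with second index \<open>\<ge> k\<^sub>1\<close>. Induction on the level
  difference straightens every pair whose indices lie above a staircase \<open>kt k \<ge> J\<^sub>0 (kbar k)\<close>,
  provided the profile \<open>J\<^sub>0\<close> is increasing with increments at most \<open>L\<close>.
  The momenta \<open>k\<^sub>i\<close> of \<open>\<psi>\<^sub>\<Lambda>\<close> are exactly such a staircase, the profile being read
  off from the column lengths of the Young diagram; hence every second momentum produced is again
  some \<open>k\<^sub>l\<^sub>'\<close>.\<close>

definition idx :: "nat \<Rightarrow> int \<Rightarrow> int \<Rightarrow> int" where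
  "idx N b J = b - int N * J"

lemma kbar_idx [simp]: "1 \<le> b \<Longrightarrow> b \<le> int N \<Longrightarrow> kbar N (idx N b J) = b"
proof -
  assume "1 \<le> b" "b \<le> int N"
  moreover have "(b - int N * J - 1) mod int N = (b - 1) mod int N"
    by (metis add.commute diff_add_eq mod_mult_self3 mult.commute diff_conv_add_uminus mult_minus_left)
  ultimately show ?thesis unfolding kbar_def idx_def by (simp add: mod_pos_pos_trivial)
qed

lemma kt_idx [simp]: "1 \<le> b \<Longrightarrow> b \<le> int N \<Longrightarrow> kt N (idx N b J) = J"
proof -
  assume "1 \<le> b" "b \<le> int N"
  then have "kbar N (idx N b J) - idx N b J = int N * J" and "int N \<noteq> 0"
    by (simp_all, simp add: idx_def)
  then show ?thesis unfolding kt_def by simp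
qed

lemma kbar_bounds: "N > 0 \<Longrightarrow> 1 \<le> kbar N k \<and> kbar N k \<le> int N"
  unfolding kbar_def by (simp add: pos_mod_bound pos_mod_sign add1_zle_eq)

lemma idx_kbar_kt: "N > 0 \<Longrightarrow> idx N (kbar N k) (kt N k) = k"
proof -
  assume "N > 0"
  have "kbar N k - k = - (int N * ((k - 1) div int N))"
    unfolding kbar_def using minus_mod_eq_mult_div[of "k - 1" "int N"] by simp
  then show ?thesis unfolding idx_def kt_def by simp
qed

definition jdot :: "nat \<Rightarrow> int \<Rightarrow> int" where
  "jdot L J = (J - 1) mod int L + 1"

definition junder :: "nat \<Rightarrow> int \<Rightarrow> int" where
  "junder L J = (J - jdot L J) div int L"

lemma jdot_bounds: "L > 0 \<Longrightarrow> 1 \<le> jdot L J \<and> jdot L J \<le> int L"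
  unfolding jdot_def by (simp add: pos_mod_bound pos_mod_sign add1_zle_eq)

lemma jdot_junder [simp]: "jdot L J + int L * junder L J = J"
proof -
  have "J - jdot L J = int L * ((J - 1) div int L)"
    unfolding jdot_def using minus_mod_eq_mult_div[of "J - 1" "int L"] by simp
  then show ?thesis unfolding junder_def by (cases "L = 0") simp_all
qed

lemma kdot_idx [simp]: "1 \<le> b \<Longrightarrow> b \<le> int N \<Longrightarrow> kdot N L (idx N b J) = jdot L J"
  unfolding kdot_def jdot_def by simp

lemma kunder_idx [simp]: "1 \<le> b \<Longrightarrow> b \<le> int N \<Longrightarrow> kunder N L (idx N b J) = junder L J"
  unfolding kunder_def junder_def by simp

lemma mkk_idx: "mkk N L b d u = idx N b (d + int L * u)"
  unfolding mkk_def idx_def by simp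

lemma idx_less_idx_iff:
  assumes "1 \<le> c" "c \<le> int N" "1 \<le> c'" "c' \<le> int N"
  shows "idx N c Y < idx N c' Y' \<longleftrightarrow> Y' < Y \<or> (Y = Y' \<and> c < c')"
proof -
  have gap: "int N * A + int N \<le> int N * B" if "A < B" for A B :: int
    using mult_left_mono[of "A + 1" B "int N"] that by (simp add: algebra_simps)
  consider "Y' < Y" | "Y = Y'" | "Y < Y'" by linarith
  then show ?thesis
    by cases (use gap[of Y' Y] gap[of Y Y'] assms in \<open>auto simp: idx_def\<close>)
qed

lemma idx_le_idx_iff:
  assumes "1 \<le> c" "c \<le> int N" "1 \<le> c'" "c' \<le> int N"
  shows "idx N c Y \<le> idx N c' Y' \<longleftrightarrow> Y' < Y \<or> (Y = Y' \<and> c \<le> c')"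
  using idx_less_idx_iff[OF assms(3,4,1,2), of Y' Y] by (auto simp: not_less[symmetric])

lemma mod_eq_less_imp_le_diff:
  fixes a b m :: int
  assumes "a mod m = b mod m" and "a < b"
  shows "a \<le> b - m"
proof (cases "0 < m")
  case True
  obtain t where t: "b - a = m * t" using assms(1) by (metis mod_eq_dvd_iff dvdE)
  with assms(2) have "0 < m * t" by simp
  with True have "1 \<le> t" by (simp add: zero_less_mult_iff)
  with True have "m \<le> m * t" by simp
  then show ?thesis using t by simp
qed (use assms(2) in simp)

lemma vadd_apply [simp]: "vadd f g x = f x + g x"
  unfolding vadd_def ..

lemma vsub_apply [simp]: "vsub f g x = f x - g x"
  unfolding vsub_def ..

lemma vsc_apply [simp]: "vsc c f x = c * f x"
  unfolding vsc_def ..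

lemma bv_apply: "bv p x = (if x = p then 1 else 0)"
  unfolding bv_def ..

lemma fsupp_subset_Un: "fsupp g \<Longrightarrow> {x. f x \<noteq> 0} \<subseteq> {x. g x \<noteq> 0} \<union> {x. h x \<noteq> 0} \<Longrightarrow> fsupp h \<Longrightarrow> fsupp f"
  unfolding fsupp_def by (meson finite_UnI finite_subset)

lemma fsupp_bv [simp]: "fsupp (bv p)"
  unfolding fsupp_def bv_def by (rule finite_subset[of _ "{p}"]) auto

lemma fsupp_zero [simp]: "fsupp (\<lambda>x. 0)"
  unfolding fsupp_def by simp

lemma fsupp_vadd [simp]: "fsupp f \<Longrightarrow> fsupp g \<Longrightarrow> fsupp (vadd f g)"
  by (erule fsupp_subset_Un) auto

lemma fsupp_vsub [simp]: "fsupp f \<Longrightarrow> fsupp g \<Longrightarrow> fsupp (vsub f g)"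
  by (erule fsupp_subset_Un) auto

lemma fsupp_vsc [simp]: "fsupp f \<Longrightarrow> fsupp (vsc c f)"
  unfolding fsupp_def by (erule finite_subset[rotated]) auto

lemma fsupp_comp_inj: "fsupp f \<Longrightarrow> inj h \<Longrightarrow> fsupp (\<lambda>x. f (h x))"
  unfolding fsupp_def using finite_vimageI[of "{x. f x \<noteq> 0}" h] by (simp add: vimage_def)

lemma lin_eq_sum: "finite S \<Longrightarrow> {p. f p \<noteq> 0} \<subseteq> S \<Longrightarrow> lin F f x = (\<Sum>p\<in>S. f p * F p x)"
  unfolding lin_def by (rule sum.mono_neutral_left) auto

lemma lin_vadd: "fsupp f \<Longrightarrow> fsupp g \<Longrightarrow> lin F (vadd f g) = vadd (lin F f) (lin F g)"
proof
  fix x assume "fsupp f" "fsupp g"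
  then have fin: "finite ({p. f p \<noteq> 0} \<union> {p. g p \<noteq> 0})" (is "finite ?S")
    unfolding fsupp_def by simp
  have "lin F (vadd f g) x = (\<Sum>p\<in>?S. vadd f g p * F p x)"
    by (rule lin_eq_sum[OF fin]) auto
  also have "\<dots> = (\<Sum>p\<in>?S. f p * F p x) + (\<Sum>p\<in>?S. g p * F p x)"
    by (simp add: distrib_right sum.distrib)
  also have "\<dots> = lin F f x + lin F g x"
    by (simp add: lin_eq_sum[OF fin])
  finally show "lin F (vadd f g) x = vadd (lin F f) (lin F g) x" by simp
qed

lemma lin_vsc: "fsupp f \<Longrightarrow> lin F (vsc c f) = vsc c (lin F f)"
proof
  fix x assume "fsupp f"
  then have fin: "finite {p. f p \<noteq> 0}" unfolding fsupp_def .
  have "lin F (vsc c f) x = (\<Sum>p\<in>{p. f p \<noteq> 0}. vsc c f p * F p x)"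
    by (rule lin_eq_sum[OF fin]) auto
  also have "\<dots> = c * lin F f x"
    by (simp add: lin_def sum_distrib_left mult.assoc)
  finally show "lin F (vsc c f) x = vsc c (lin F f) x" by simp
qed

lemma lin_zero [simp]: "lin F (\<lambda>x. 0) = (\<lambda>x. 0)"
  unfolding lin_def by simp

lemma lin_bv [simp]: "lin F (bv p) = F p"
proof
  fix x
  have "lin F (bv p) x = (\<Sum>p'\<in>{p}. bv p p' * F p' x)"
    by (rule lin_eq_sum) (auto simp: bv_def)
  then show "lin F (bv p) x = F p x" by (simp add: bv_def)
qed

lemma lin_relabel:
  assumes "fsupp f" and "\<And>p x. x = h p \<longleftrightarrow> p = h' x"
  shows "lin (\<lambda>p. bv (h p)) f = (\<lambda>x. f (h' x))"
proof
  fix x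
  have "lin (\<lambda>p. bv (h p)) f x = (\<Sum>p\<in>{p. f p \<noteq> 0}. if p = h' x then f p else 0)"
    unfolding lin_def bv_def by (rule sum.cong) (auto simp: assms(2))
  also have "\<dots> = f (h' x)" using assms(1) unfolding fsupp_def by auto
  finally show "lin (\<lambda>p. bv (h p)) f x = f (h' x)" .
qed

lemma lin_bv_self: "fsupp c \<Longrightarrow> lin bv c = c"
  using lin_relabel[of c "\<lambda>p. p" "\<lambda>x. x"] by auto

lemma fsupp_lin: "fsupp f \<Longrightarrow> (\<And>p. fsupp (F p)) \<Longrightarrow> fsupp (lin F f)"
proof -
  assume f: "fsupp f" and F: "\<And>p. fsupp (F p)"
  have "{x. lin F f x \<noteq> 0} \<subseteq> (\<Union>p\<in>{p. f p \<noteq> 0}. {x. F p x \<noteq> 0})"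
  proof
    fix x assume "x \<in> {x. lin F f x \<noteq> 0}"
    then obtain p where "p \<in> {p. f p \<noteq> 0}" "f p * F p x \<noteq> 0"
      unfolding lin_def by (auto elim: sum.not_neutral_contains_not_neutral)
    then show "x \<in> (\<Union>p\<in>{p. f p \<noteq> 0}. {x. F p x \<noteq> 0})" by (intro UN_I[of p]) auto
  qed
  moreover have "finite (\<Union>p\<in>{p. f p \<noteq> 0}. {x. F p x \<noteq> 0})"
    using f F unfolding fsupp_def by auto
  ultimately show ?thesis unfolding fsupp_def by (rule finite_subset)
qed

lemma antidiagonal_last_nonzero:
  fixes g :: vec
  assumes "fsupp g" and "c \<noteq> 0" and "g x \<noteq> 0"
  obtains n :: nat where "g (fst x + int n * c, snd x - int n * c) \<noteq> 0"
    and "g (fst x + int (Suc n) * c, snd x - int (Suc n) * c) = 0"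
proof -
  let ?T = "{n. g (fst x + int n * c, snd x - int n * c) \<noteq> 0}"
  have "inj (\<lambda>n::nat. (fst x + int n * c, snd x - int n * c))"
    using \<open>c \<noteq> 0\<close> by (auto simp: inj_def)
  then have fin: "finite ?T"
    using finite_vimageI[of "{x. g x \<noteq> 0}"] \<open>fsupp g\<close> unfolding fsupp_def vimage_def by simp
  have "0 \<in> ?T" using \<open>g x \<noteq> 0\<close> by simp
  then have "Max ?T \<in> ?T" using fin Max_in by blast
  moreover have "Suc (Max ?T) \<notin> ?T"
    using Max_ge[OF fin, of "Suc (Max ?T)"] by auto
  ultimately show thesis using that by simp
qed

lemma antidiagonal_shift_eq_zero:
  fixes h :: vec
  assumes "fsupp h" and "c \<noteq> 0" and "r \<noteq> 0"
    and eq: "\<And>x. r * h (fst x, snd x + c) = h (fst x + c, snd x)"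
  shows "h = (\<lambda>x. 0)"
proof (rule ccontr)
  assume "h \<noteq> (\<lambda>x. 0)"
  then obtain x where "h x \<noteq> 0" by (meson ext)
  then obtain n :: nat where n: "h (fst x + int n * c, snd x - int n * c) \<noteq> 0"
    and "h (fst x + int (Suc n) * c, snd x - int (Suc n) * c) = 0"
    using antidiagonal_last_nonzero[OF assms(1,2)] by blast
  moreover have "r * h (fst x + int n * c, snd x - int n * c) =
      h (fst x + int (Suc n) * c, snd x - int (Suc n) * c)"
    using eq[of "(fst x + int n * c, snd x - int (Suc n) * c)"] by (simp add: algebra_simps)
  ultimately show False using \<open>r \<noteq> 0\<close> by simp
qed

locale fock =
  fixes N L :: nat
  assumes N_pos: "0 < N" and L_pos: "0 < L"
begin

definition ipair :: "int \<Rightarrow> int \<Rightarrow> int \<Rightarrow> int \<Rightarrow> int \<times> int" where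
  "ipair b1 b2 Y1 Y2 = (idx N b1 Y1, idx N b2 Y2)"

lemma ipair_eq_iff [simp]: "ipair b1 b2 Y1 Y2 = ipair b1 b2 Y1' Y2' \<longleftrightarrow> Y1 = Y1' \<and> Y2 = Y2'"
  unfolding ipair_def idx_def using N_pos by auto

lemma ipair_cases:
  obtains b1 b2 Y1 Y2 where "b1 \<in> {1..int N}" "b2 \<in> {1..int N}" "p = ipair b1 b2 Y1 Y2"
  using kbar_bounds[OF N_pos] idx_kbar_kt[OF N_pos] unfolding ipair_def
  by (metis atLeastAtMost_iff prod.collapse)

lemma ipair_colours_eq:
  assumes "1 \<le> b1" "b1 \<le> int N" "1 \<le> b2" "b2 \<le> int N" "1 \<le> c1" "c1 \<le> int N" "1 \<le> c2" "c2 \<le> int N"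
  shows "ipair b1 b2 Y1 Y2 = ipair c1 c2 Y1' Y2' \<Longrightarrow> b1 = c1 \<and> b2 = c2"
  using kbar_idx[of b1 N Y1] kbar_idx[of c1 N Y1'] kbar_idx[of b2 N Y2] kbar_idx[of c2 N Y2'] assms
  unfolding ipair_def by auto

context
  fixes b1 b2 :: int
  assumes b1: "1 \<le> b1" "b1 \<le> int N" and b2: "1 \<le> b2" "b2 \<le> int N"
begin

lemma kbar_kdot_ipair [simp]:
  "kbar N (fst (ipair b1 b2 Y1 Y2)) = b1" "kbar N (snd (ipair b1 b2 Y1 Y2)) = b2"
  "kdot N L (fst (ipair b1 b2 Y1 Y2)) = jdot L Y1" "kdot N L (snd (ipair b1 b2 Y1 Y2)) = jdot L Y2"
  using b1 b2 unfolding ipair_def by simp_all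

lemma swapZE_ipair [simp]: "swapZE N L (ipair b1 b2 Y1 Y2) = ipair b1 b2 Y2 Y1"
  unfolding swapZE_def ipair_def using b1 b2 by (simp add: mkk_idx)

lemma swapbar_ipair [simp]: "swapbar N L (ipair b1 b2 Y1 Y2) = ipair b2 b1 Y1 Y2"
  unfolding swapbar_def ipair_def using b1 b2 by (simp add: mkk_idx)

lemma swapdot_ipair [simp]:
  "swapdot N L (ipair b1 b2 Y1 Y2) = ipair b1 b2 (jdot L Y2 + int L * junder L Y1) (jdot L Y1 + int L * junder L Y2)"
  unfolding swapdot_def ipair_def using b1 b2 by (simp add: mkk_idx)

end

lemma z1b_ipair [simp]: "z1b N L (ipair b1 b2 Y1 Y2) = bv (ipair b1 b2 (Y1 + int L) Y2)"
  unfolding z1b_def ipair_def idx_def by (simp add: algebra_simps)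

lemma z2b_ipair [simp]: "z2b N L (ipair b1 b2 Y1 Y2) = bv (ipair b1 b2 Y1 (Y2 + int L))"
  unfolding z2b_def ipair_def idx_def by (simp add: algebra_simps)

lemma swapZE_swapZE [simp]: "swapZE N L (swapZE N L p) = p"
  by (cases p rule: ipair_cases) simp

lemma Z1_eq: "fsupp f \<Longrightarrow> Z1 N L f = (\<lambda>x. f (fst x + int N * int L, snd x))"
  unfolding Z1_def z1b_def by (rule lin_relabel) auto

lemma Z2_eq: "fsupp f \<Longrightarrow> Z2 N L f = (\<lambda>x. f (fst x, snd x + int N * int L))"
  unfolding Z2_def z2b_def by (rule lin_relabel) auto

lemma SS_eq: "fsupp f \<Longrightarrow> SS N L f = (\<lambda>x. f (swapZE N L x))"
  unfolding SS_def by (rule lin_relabel) auto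

lemma fsupp_Z1 [simp]: "fsupp f \<Longrightarrow> fsupp (Z1 N L f)"
  using fsupp_comp_inj[of f "\<lambda>x. (fst x + int N * int L, snd x)"]
  by (simp add: Z1_eq inj_def prod_eq_iff)

lemma fsupp_Z2 [simp]: "fsupp f \<Longrightarrow> fsupp (Z2 N L f)"
  using fsupp_comp_inj[of f "\<lambda>x. (fst x, snd x + int N * int L)"]
  by (simp add: Z2_eq inj_def prod_eq_iff)

lemma fsupp_SS [simp]: "fsupp f \<Longrightarrow> fsupp (SS N L f)"
  using fsupp_comp_inj[of f "swapZE N L"] by (simp add: SS_eq) (metis injI swapZE_swapZE)

lemma fsupp_Rb [simp]: "fsupp (Rb N L p)"
  unfolding Rb_def Let_def z1b_def z2b_def by simp

lemma fsupp_RR [simp]: "fsupp f \<Longrightarrow> fsupp (RR N L f)"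
  unfolding RR_def by (rule fsupp_lin) simp_all

lemma Z1_apply: "fsupp f \<Longrightarrow> Z1 N L f x = f (fst x + int N * int L, snd x)"
  by (simp add: Z1_eq)

lemma Z2_apply: "fsupp f \<Longrightarrow> Z2 N L f x = f (fst x, snd x + int N * int L)"
  by (simp add: Z2_eq)

lemma SS_apply: "fsupp f \<Longrightarrow> SS N L f x = f (swapZE N L x)"
  by (simp add: SS_eq)

section \<open>Division by \<open>z\<^sub>1 - z\<^sub>2\<close>\<close>

lemma qq_pos: "qq N > 0"
proof -
  have "tvar > 0"
    unfolding tvar_def by (simp add: zero_less_Fract_iff less_poly_def pos_poly_def)
  then show ?thesis unfolding qq_def by simp
qed

definition zdiff :: "vec \<Rightarrow> vec" where
  "zdiff h = vsub (Z1 N L h) (Z2 N L h)"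

text \<open>Cancelling the injective factor \<open>q\<^sup>2 z\<^sub>2 - z\<^sub>1\<close> from the defining equation of
  \<open>cT f = g\<close> leaves \<open>(z\<^sub>1 - z\<^sub>2) (g + f) = s (R f) + (z\<^sub>1 - q\<^sup>2 z\<^sub>2) f\<close>;
  the right-hand side is \<open>cT_num f\<close>.\<close>

definition cT_num :: "vec \<Rightarrow> vec" where
  "cT_num f = vadd (SS N L (RR N L f)) (vsub (Z1 N L f) (vsc (qq N ^ 2) (Z2 N L f)))"

lemma zdiff_apply:
  "fsupp h \<Longrightarrow> zdiff h x = h (fst x + int N * int L, snd x) - h (fst x, snd x + int N * int L)"
  unfolding zdiff_def by (simp add: Z1_apply Z2_apply)

lemma fsupp_zdiff [simp]: "fsupp h \<Longrightarrow> fsupp (zdiff h)"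
  unfolding zdiff_def by simp

lemma fsupp_cT_num [simp]: "fsupp f \<Longrightarrow> fsupp (cT_num f)"
  unfolding cT_num_def by simp

lemma zdiff_eq_zero_iff:
  assumes "fsupp h"
  shows "zdiff h = (\<lambda>x. 0) \<longleftrightarrow> h = (\<lambda>x. 0)"
proof
  assume "zdiff h = (\<lambda>x. 0)"
  then have eq: "1 * h (fst x, snd x + int N * int L) = h (fst x + int N * int L, snd x)" for x
    using zdiff_apply[OF assms, of x] by simp
  show "h = (\<lambda>x. 0)"
    by (rule antidiagonal_shift_eq_zero[OF assms _ _ eq]) (use N_pos L_pos in simp_all)
qed (simp add: zdiff_def Z1_eq Z2_eq vsub_def)

lemma cT_equation_iff:
  assumes f: "fsupp f" and Y: "fsupp Y"
  shows "(let q = qq N;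
          mD1 = (\<lambda>h. vsub (Z1 N L h) (Z2 N L h));
          msD2 = (\<lambda>h. vsub (vsc (q^2) (Z2 N L h)) (Z1 N L h));
          mP = (\<lambda>h. vsub (Z1 N L h) (vsc (q^2) (Z2 N L h)))
      in mD1 (msD2 Y) = mP (vsub (msD2 f) (SS N L (RR N L f))))
    \<longleftrightarrow> zdiff Y = cT_num f" (is "?lhs \<longleftrightarrow> _")
proof -
  define H where "H = vsub (zdiff Y) (cT_num f)"
  have fH: "fsupp H" unfolding H_def using f Y by simp
  have "?lhs \<longleftrightarrow> (\<forall>x. qq N ^ 2 * H (fst x, snd x + int N * int L) - H (fst x + int N * int L, snd x) = 0)"
    unfolding Let_def fun_eq_iff
  proof (intro all_cong1)
    fix x
    let ?c = "int N * int L"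
    let ?S = "SS N L (RR N L f)"
    have "fsupp ?S" using f by simp
    then show "(vsub (Z1 N L (vsub (vsc (qq N ^ 2) (Z2 N L Y)) (Z1 N L Y))) (Z2 N L (vsub (vsc (qq N ^ 2) (Z2 N L Y)) (Z1 N L Y))) x =
        vsub (Z1 N L (vsub (vsub (vsc (qq N ^ 2) (Z2 N L f)) (Z1 N L f)) ?S))
         (vsc (qq N ^ 2) (Z2 N L (vsub (vsub (vsc (qq N ^ 2) (Z2 N L f)) (Z1 N L f)) ?S))) x) \<longleftrightarrow>
      qq N ^ 2 * H (fst x, snd x + ?c) - H (fst x + ?c, snd x) = 0"
      unfolding H_def using f Y
      by (simp add: zdiff_apply cT_num_def Z1_apply Z2_apply algebra_simps)
  qed
  also have "\<dots> \<longleftrightarrow> H = (\<lambda>x. 0)"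
  proof
    assume "\<forall>x. qq N ^ 2 * H (fst x, snd x + int N * int L) - H (fst x + int N * int L, snd x) = 0"
    then show "H = (\<lambda>x. 0)"
      by (intro antidiagonal_shift_eq_zero[OF fH]) (use N_pos L_pos qq_pos in auto)
  qed simp
  also have "\<dots> \<longleftrightarrow> zdiff Y = cT_num f"
    unfolding H_def fun_eq_iff by simp
  finally show ?thesis .
qed

lemma cT_eqI:
  assumes f: "fsupp f" and X: "fsupp X" and eq: "zdiff X = cT_num f"
  shows "cT N L f = vsub X f"
  unfolding cT_def
proof (rule the_equality)
  have "vadd (vsub X f) f = X" by (simp add: fun_eq_iff)
  then show "fsupp (vsub X f) \<and> (let q = qq N;
          mD1 = (\<lambda>h. vsub (Z1 N L h) (Z2 N L h));
          msD2 = (\<lambda>h. vsub (vsc (q^2) (Z2 N L h)) (Z1 N L h));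
          mP = (\<lambda>h. vsub (Z1 N L h) (vsc (q^2) (Z2 N L h)))
      in mD1 (msD2 (vadd (vsub X f) f)) = mP (vsub (msD2 f) (SS N L (RR N L f))))"
    using cT_equation_iff[OF f X] eq f X by simp
next
  fix g assume "fsupp g \<and> (let q = qq N;
          mD1 = (\<lambda>h. vsub (Z1 N L h) (Z2 N L h));
          msD2 = (\<lambda>h. vsub (vsc (q^2) (Z2 N L h)) (Z1 N L h));
          mP = (\<lambda>h. vsub (Z1 N L h) (vsc (q^2) (Z2 N L h)))
      in mD1 (msD2 (vadd g f)) = mP (vsub (msD2 f) (SS N L (RR N L f))))"
  then have g: "fsupp g" and "zdiff (vadd g f) = zdiff X"
    using cT_equation_iff[OF f, of "vadd g f"] eq f by auto
  moreover have "zdiff (vsub (vadd g f) X) x = zdiff (vadd g f) x - zdiff X x" for x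
    using f g X by (simp add: zdiff_apply algebra_simps)
  ultimately have "zdiff (vsub (vadd g f) X) = (\<lambda>x. 0)"
    by (simp add: fun_eq_iff)
  then have "vsub (vadd g f) X = (\<lambda>x. 0)"
    using zdiff_eq_zero_iff f g X by simp
  then show "g = vsub X f" by (simp add: fun_eq_iff algebra_simps)
qed

lemma zdiff_vadd: "fsupp X \<Longrightarrow> fsupp Y \<Longrightarrow> zdiff (vadd X Y) = vadd (zdiff X) (zdiff Y)"
  by (simp add: fun_eq_iff zdiff_apply)

lemma zdiff_vsc: "fsupp X \<Longrightarrow> zdiff (vsc a X) = vsc a (zdiff X)"
  by (simp add: fun_eq_iff zdiff_apply algebra_simps)

lemma zdiff_bv_ipair:
  "zdiff (bv (ipair b1 b2 A B)) = vsub (bv (ipair b1 b2 (A + int L) B)) (bv (ipair b1 b2 A (B + int L)))"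
  unfolding zdiff_def Z1_def Z2_def by simp

definition zdiff_image :: "vec set" where
  "zdiff_image = zdiff ` {X. fsupp X}"

lemma zero_in_zdiff_image: "(\<lambda>x. 0) \<in> zdiff_image"
  unfolding zdiff_image_def by (rule image_eqI[of _ _ "\<lambda>x. 0"]) (simp_all add: zdiff_def Z1_eq Z2_eq vsub_def)

lemma zdiff_image_vadd: "f \<in> zdiff_image \<Longrightarrow> g \<in> zdiff_image \<Longrightarrow> vadd f g \<in> zdiff_image"
  unfolding zdiff_image_def by (auto simp: zdiff_vadd[symmetric])

lemma zdiff_image_vsc: "f \<in> zdiff_image \<Longrightarrow> vsc a f \<in> zdiff_image"
  unfolding zdiff_image_def by (auto simp: zdiff_vsc[symmetric])

lemma zdiff_image_vsub: "f \<in> zdiff_image \<Longrightarrow> g \<in> zdiff_image \<Longrightarrow> vsub f g \<in> zdiff_image"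
  using zdiff_image_vadd[OF _ zdiff_image_vsc[of g "-1"], of f]
  by (simp add: vadd_def vsc_def vsub_def)

lemma antidiagonal_bv_diff_in_zdiff_image:
  assumes sum: "A + B = A' + B'" and res: "A mod int L = A' mod int L"
  shows "vsub (bv (ipair b1 b2 A B)) (bv (ipair b1 b2 A' B')) \<in> zdiff_image"
proof -
  have chain: "vsub (bv (ipair b1 b2 (P + int n * int L) (Q - int n * int L))) (bv (ipair b1 b2 P Q))
      \<in> zdiff_image" for n P Q
  proof (induction n)
    case 0
    then show ?case using zero_in_zdiff_image by (simp add: vsub_def)
  next
    case (Suc n)
    let ?P = "\<lambda>n. bv (ipair b1 b2 (P + int n * int L) (Q - int n * int L))"
    have "vsub (?P (Suc n)) (?P n) = zdiff (bv (ipair b1 b2 (P + int n * int L) (Q - int (Suc n) * int L)))"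
      unfolding zdiff_bv_ipair by (simp add: algebra_simps)
    then have "vsub (?P (Suc n)) (?P n) \<in> zdiff_image"
      unfolding zdiff_image_def by auto
    from zdiff_image_vadd[OF this Suc] show ?case
      by (simp add: vadd_def vsub_def)
  qed
  have "int L dvd A' - A" using res[symmetric] by (simp add: mod_eq_dvd_iff)
  then obtain m where "A' - A = int L * m" by (rule dvdE)
  then have A': "A' = A + m * int L" by (simp add: algebra_simps)
  then have B': "B' = B - m * int L" using sum by simp
  show ?thesis
  proof (cases "m \<ge> 0")
    case True
    define n where "n = nat m"
    then have "m = int n" using True by simp
    then have "vsub (bv (ipair b1 b2 A' B')) (bv (ipair b1 b2 A B)) \<in> zdiff_image"
      using chain[where P = A and Q = B and n = n] A' B' by simp
    from zdiff_image_vsc[OF this, of "-1"] show ?thesis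
      by (simp add: vsc_def vsub_def)
  next
    case False
    define n where "n = nat (- m)"
    then have "m = - int n" using False by simp
    then show ?thesis
      using chain[where P = A' and Q = B' and n = n] A' B' by simp
  qed
qed

lemma shifted_eq_ipair_iff:
  "(fst x + s * (int N * int L), snd x + t * (int N * int L)) = ipair b1 b2 A B \<longleftrightarrow>
   x = ipair b1 b2 (A + s * int L) (B + t * int L)"
  unfolding ipair_def idx_def by (cases x) (auto simp: algebra_simps)

text \<open>A finitely supported \<open>X\<close> has a last nonzero entry in each direction along every
  antidiagonal, and \<open>zdiff X\<close> is nonzero just beyond it.\<close>

lemma zdiff_nonzero_beyond:
  assumes "fsupp X" and "X x \<noteq> 0"
  obtains n n' :: nat
  where "zdiff X (fst x + (- int (Suc n)) * (int N * int L), snd x + int n * (int N * int L)) \<noteq> 0"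
    and "zdiff X (fst x + int n' * (int N * int L), snd x + (- int (Suc n')) * (int N * int L)) \<noteq> 0"
proof -
  let ?c = "int N * int L"
  have c: "?c \<noteq> 0" using N_pos L_pos by simp
  obtain n :: nat where "X (fst x + int n * - ?c, snd x - int n * - ?c) \<noteq> 0"
    and "X (fst x + int (Suc n) * - ?c, snd x - int (Suc n) * - ?c) = 0"
    using antidiagonal_last_nonzero[OF assms(1) _ assms(2), of "- ?c"] c by auto
  then have "zdiff X (fst x + (- int (Suc n)) * ?c, snd x + int n * ?c) \<noteq> 0"
    using assms(1) by (simp add: zdiff_apply algebra_simps)
  moreover obtain n' :: nat where "X (fst x + int n' * ?c, snd x - int n' * ?c) \<noteq> 0"
    and "X (fst x + int (Suc n') * ?c, snd x - int (Suc n') * ?c) = 0"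
    using antidiagonal_last_nonzero[OF assms(1) c assms(2)] by auto
  then have "zdiff X (fst x + int n' * ?c, snd x + (- int (Suc n')) * ?c) \<noteq> 0"
    using assms(1) by (simp add: zdiff_apply algebra_simps)
  ultimately show thesis using that by blast
qed

lemma zdiff_ipair:
  "fsupp X \<Longrightarrow> zdiff X (ipair b1 b2 A B) = X (ipair b1 b2 (A - int L) B) - X (ipair b1 b2 A (B - int L))"
  by (simp add: zdiff_apply ipair_def idx_def algebra_simps)

text \<open>Position of the \<open>E\<^sub>a\<^sub>,\<^sub>b \<otimes> E\<^sub>b\<^sub>,\<^sub>a\<close> term of \<open>R\<close>, after the exchange \<open>s\<close>, for the
  levels \<open>I\<^sub>1, I\<^sub>2\<close> of a basis vector with distinct dots.\<close>

definition dot_exchange :: "int \<Rightarrow> int \<Rightarrow> int \<times> int" where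
  "dot_exchange I1 I2 = (if jdot L I2 < jdot L I1
     then (jdot L I1 + int L * junder L I2, jdot L I2 + int L * junder L I1 + int L)
     else (jdot L I1 + int L * junder L I2 + int L, jdot L I2 + int L * junder L I1))"

definition num_support :: "int \<Rightarrow> int \<Rightarrow> (int \<times> int) set" where
  "num_support I1 I2 =
     {(I1 + int L, I2), (I1, I2 + int L), (I2, I1 + int L), (I2 + int L, I1), dot_exchange I1 I2}"

lemma jdot_eq_iff: "jdot L I1 = jdot L I2 \<longleftrightarrow> I1 mod int L = I2 mod int L"
  unfolding jdot_def by (simp add: mod_diff_cong mod_eq_dvd_iff)

lemma dot_exchange_props:
  shows "fst (dot_exchange I1 I2) + snd (dot_exchange I1 I2) = I1 + I2 + int L"
    and "I2 \<le> fst (dot_exchange I1 I2)" and "fst (dot_exchange I1 I2) \<le> I2 + int L"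
    and "jdot L I1 \<noteq> jdot L I2 \<Longrightarrow> fst (dot_exchange I1 I2) < I2 + int L"
    and "fst (dot_exchange I1 I2) mod int L = I1 mod int L"
proof -
  define d1 d2 u1 u2 where "d1 = jdot L I1" and "d2 = jdot L I2"
    and "u1 = junder L I1" and "u2 = junder L I2"
  have d: "1 \<le> d1" "d1 \<le> int L" "1 \<le> d2" "d2 \<le> int L"
    unfolding d1_def d2_def using jdot_bounds[OF L_pos] by auto
  have I: "I1 = d1 + int L * u1" "I2 = d2 + int L * u2"
    unfolding d1_def d2_def u1_def u2_def by simp_all
  have e: "dot_exchange I1 I2 = (if d2 < d1 then (d1 + int L * u2, d2 + int L * u1 + int L)
      else (d1 + int L * u2 + int L, d2 + int L * u1))"
    unfolding dot_exchange_def d1_def d2_def u1_def u2_def ..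
  show "fst (dot_exchange I1 I2) + snd (dot_exchange I1 I2) = I1 + I2 + int L"
    and "I2 \<le> fst (dot_exchange I1 I2)" and "fst (dot_exchange I1 I2) \<le> I2 + int L"
    and "jdot L I1 \<noteq> jdot L I2 \<Longrightarrow> fst (dot_exchange I1 I2) < I2 + int L"
    unfolding e d1_def[symmetric] d2_def[symmetric] using d I by auto
  have "fst (dot_exchange I1 I2) = I1 + int L * (u2 - u1 + (if d2 < d1 then 0 else 1))"
    using I unfolding e by (simp add: algebra_simps)
  then show "fst (dot_exchange I1 I2) mod int L = I1 mod int L" by simp
qed

lemma num_support_props:
  assumes "(A, B) \<in> num_support I1 I2"
  shows "A + B = I1 + I2 + int L" and "min I1 I2 \<le> A" and "A \<le> max I1 I2 + int L"
    and "A = I2 \<or> A = I2 + int L \<or> A mod int L = I1 mod int L"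
  using assms dot_exchange_props(1,3,5)[of I1 I2] dot_exchange_props(2)[of I2 I1]
  unfolding num_support_def
  by (auto simp: prod_eq_iff min_le_iff_disj le_max_iff_disj)

context
  fixes b1 b2 :: int
  assumes b1: "1 \<le> b1" "b1 \<le> int N" and b2: "1 \<le> b2" "b2 \<le> int N"
begin

lemma cT_num_bv:
  "cT_num (bv (ipair b1 b2 I1 I2)) = (\<lambda>x.
     bv (ipair b1 b2 (I1 + int L) I2) x - qq N ^ 2 * bv (ipair b1 b2 I1 (I2 + int L)) x +
     (if jdot L I1 = jdot L I2
      then qq N ^ 2 * bv (ipair b1 b2 I2 (I1 + int L)) x - bv (ipair b1 b2 (I2 + int L) I1) x
      else qq N * bv (ipair b1 b2 I2 (I1 + int L)) x - qq N * bv (ipair b1 b2 (I2 + int L) I1) x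
           + (qq N ^ 2 - 1) * bv (ipair b1 b2 (fst (dot_exchange I1 I2)) (snd (dot_exchange I1 I2))) x))"
  (is "_ = ?R")
proof
  fix x
  let ?p = "ipair b1 b2 I1 I2"
  have swap: "bv (ipair b1 b2 Y1 Y2) (swapZE N L x) = bv (ipair b1 b2 Y2 Y1) x" for Y1 Y2
    unfolding bv_def using b1 b2 by (metis swapZE_ipair swapZE_swapZE)
  have num: "cT_num (bv ?p) x = Rb N L ?p (swapZE N L x) + bv (ipair b1 b2 (I1 + int L) I2) x
      - qq N ^ 2 * bv (ipair b1 b2 I1 (I2 + int L)) x"
    unfolding cT_num_def RR_def Z1_def Z2_def by (simp add: SS_apply)
  consider "jdot L I1 = jdot L I2" | "jdot L I2 < jdot L I1" | "jdot L I1 < jdot L I2"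
    by linarith
  then show "cT_num (bv ?p) x = ?R x"
    by cases (simp_all add: num Rb_def Let_def dot_exchange_def swap b1 b2 algebra_simps)
qed

lemma cT_num_bv_nonzero:
  assumes "cT_num (bv (ipair b1 b2 I1 I2)) y \<noteq> 0"
  obtains A B where "(A, B) \<in> num_support I1 I2" and "y = ipair b1 b2 A B"
proof -
  have "\<exists>(A, B) \<in> num_support I1 I2. y = ipair b1 b2 A B"
  proof (rule ccontr)
    assume "\<not> ?thesis"
    then have z: "bv (ipair b1 b2 A B) y = 0" if "(A, B) \<in> num_support I1 I2" for A B
      using that unfolding bv_def by auto
    have "(fst (dot_exchange I1 I2), snd (dot_exchange I1 I2)) \<in> num_support I1 I2"
      unfolding num_support_def by simp
    then show False
      using z[of "I1 + int L" I2] z[of I1 "I2 + int L"] z[of I2 "I1 + int L"]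
        z[of "I2 + int L" I1] z[of "fst (dot_exchange I1 I2)" "snd (dot_exchange I1 I2)"] assms
      unfolding cT_num_bv num_support_def by (simp split: if_splits)
  qed
  then show thesis using that by blast
qed

lemma cT_num_bv_in_zdiff_image: "cT_num (bv (ipair b1 b2 I1 I2)) \<in> zdiff_image"
proof -
  let ?b = "\<lambda>A B. bv (ipair b1 b2 A B)"
  let ?E = "dot_exchange I1 I2"
  note diff = antidiagonal_bv_diff_in_zdiff_image
  show ?thesis
  proof (cases "jdot L I1 = jdot L I2")
    case True
    then have res: "I1 mod int L = I2 mod int L" by (simp add: jdot_eq_iff)
    have "cT_num (bv (ipair b1 b2 I1 I2)) =
        vsub (vsub (?b (I1 + int L) I2) (?b (I2 + int L) I1))
             (vsc (qq N ^ 2) (vsub (?b I1 (I2 + int L)) (?b I2 (I1 + int L))))"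
      using True by (simp add: cT_num_bv fun_eq_iff algebra_simps)
    then show ?thesis
      by (simp only:) (intro zdiff_image_vsub zdiff_image_vsc diff; use res in simp)
  next
    case False
    have "cT_num (bv (ipair b1 b2 I1 I2)) =
        vadd (vadd (vsub (?b (I1 + int L) I2) (?b I1 (I2 + int L)))
                   (vsc (qq N ^ 2 - 1) (vsub (?b (fst ?E) (snd ?E)) (?b I1 (I2 + int L)))))
             (vsc (qq N) (vsub (?b I2 (I1 + int L)) (?b (I2 + int L) I1)))"
      using False by (simp add: cT_num_bv fun_eq_iff algebra_simps)
    then show ?thesis
      by (simp only:) (intro zdiff_image_vadd zdiff_image_vsc diff; use dot_exchange_props(1,5)[of I1 I2] in simp)
  qed
qed

text \<open>By \<open>zdiff_nonzero_beyond\<close>, \<open>x\<close> lies on its antidiagonal between two points of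
  \<open>num_support\<close>, shifted by multiples of \<open>L\<close>.\<close>

lemma quotient_support:
  assumes X: "fsupp X" "zdiff X = cT_num (bv (ipair b1 b2 I1 I2))" and "X x \<noteq> 0"
  obtains Y1 Y2 where "x = ipair b1 b2 Y1 Y2" and "Y1 + Y2 = I1 + I2"
    and "min I1 I2 \<le> Y1" and "Y1 \<le> max I1 I2"
    and "I2 \<le> I1 \<Longrightarrow> Y1 = I2 \<or> Y1 mod int L = I1 mod int L"
proof -
  obtain n n' :: nat
    where n: "cT_num (bv (ipair b1 b2 I1 I2))
        (fst x + (- int (Suc n)) * (int N * int L), snd x + int n * (int N * int L)) \<noteq> 0"
      and n': "cT_num (bv (ipair b1 b2 I1 I2))
        (fst x + int n' * (int N * int L), snd x + (- int (Suc n')) * (int N * int L)) \<noteq> 0"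
    using zdiff_nonzero_beyond[OF X(1) assms(3)] unfolding X(2) by blast
  obtain A B where AB: "(A, B) \<in> num_support I1 I2"
    and x: "x = ipair b1 b2 (A + (- int (Suc n)) * int L) (B + int n * int L)"
    using cT_num_bv_nonzero[OF n] unfolding shifted_eq_ipair_iff by blast
  obtain A' B' where AB': "(A', B') \<in> num_support I1 I2"
    and x': "x = ipair b1 b2 (A' + int n' * int L) (B' + (- int (Suc n')) * int L)"
    using cT_num_bv_nonzero[OF n'] unfolding shifted_eq_ipair_iff by blast
  define Y1 Y2 where "Y1 = A - int n * int L - int L" and "Y2 = B + int n * int L"
  have x: "x = ipair b1 b2 Y1 Y2"
    using x unfolding Y1_def Y2_def by (simp add: algebra_simps)
  have Y1': "Y1 = A' + int n' * int L"
    using x x' unfolding Y1_def by simp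
  have nL: "0 \<le> int n * int L" "0 \<le> int n' * int L" by simp_all
  note props = num_support_props[OF AB] num_support_props[OF AB']
  have bounds: "min I1 I2 \<le> Y1" "Y1 \<le> max I1 I2"
    using props(2,3,6) Y1' nL unfolding Y1_def by linarith+
  have "Y1 = I2 \<or> Y1 mod int L = I1 mod int L" if "I2 \<le> I1"
  proof -
    have "I2 \<le> Y1" using bounds(1) that by simp
    then have "A \<noteq> I2" and "A = I2 + int L \<Longrightarrow> Y1 = I2"
      using L_pos nL unfolding Y1_def by linarith+
    moreover have "Y1 = A + int L * (- int n - 1)"
      unfolding Y1_def by (simp add: algebra_simps)
    then have "Y1 mod int L = A mod int L" by simp
    ultimately show ?thesis using props(4) by auto
  qed
  moreover have "Y1 + Y2 = I1 + I2"
    using props(1) unfolding Y1_def Y2_def by simp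
  ultimately show thesis using that x bounds by blast
qed

lemma quotient_at_extreme:
  assumes X: "fsupp X" "zdiff X = cT_num (bv (ipair b1 b2 I1 I2))"
  shows "X (ipair b1 b2 (max I1 I2) (min I1 I2)) =
    cT_num (bv (ipair b1 b2 I1 I2)) (ipair b1 b2 (max I1 I2 + int L) (min I1 I2))"
proof -
  have "X (ipair b1 b2 (max I1 I2 + int L) (min I1 I2 - int L)) = 0"
  proof (rule ccontr)
    assume "X (ipair b1 b2 (max I1 I2 + int L) (min I1 I2 - int L)) \<noteq> 0"
    then obtain Y1 Y2 where "ipair b1 b2 (max I1 I2 + int L) (min I1 I2 - int L) = ipair b1 b2 Y1 Y2"
      and "Y1 \<le> max I1 I2"
      using quotient_support[OF X] by metis
    then show False using L_pos by simp
  qed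
  then show ?thesis
    using zdiff_ipair[OF X(1), of b1 b2 "max I1 I2 + int L" "min I1 I2"] X(2) by simp
qed

lemma cT_bv_eq:
  obtains X where "fsupp X" and "zdiff X = cT_num (bv (ipair b1 b2 I1 I2))"
    and "cT N L (bv (ipair b1 b2 I1 I2)) = vsub X (bv (ipair b1 b2 I1 I2))"
proof -
  obtain X where "fsupp X" and "cT_num (bv (ipair b1 b2 I1 I2)) = zdiff X"
    using cT_num_bv_in_zdiff_image[of I1 I2] unfolding zdiff_image_def by blast
  then show thesis using that cT_eqI[OF fsupp_bv] by simp
qed

lemma fsupp_cT_bv: "fsupp (cT N L (bv (ipair b1 b2 I1 I2)))"
  by (cases rule: cT_bv_eq[of I1 I2]) simp

lemma cT_bv_diag: "cT N L (bv (ipair b1 b2 I I)) = vsc (- 1) (bv (ipair b1 b2 I I))"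
proof -
  have "cT_num (bv (ipair b1 b2 I I)) = (\<lambda>x. 0)"
    by (simp add: cT_num_bv fun_eq_iff)
  then have "cT N L (bv (ipair b1 b2 I I)) = vsub (\<lambda>x. 0) (bv (ipair b1 b2 I I))"
    using cT_eqI[OF fsupp_bv fsupp_zero] zero_in_zdiff_image zdiff_eq_zero_iff[OF fsupp_zero] by simp
  then show ?thesis by (simp add: fun_eq_iff)
qed

lemma cT_bv_support:
  assumes "cT N L (bv (ipair b1 b2 I1 I2)) x \<noteq> 0"
  obtains Y1 Y2 where "x = ipair b1 b2 Y1 Y2" and "Y1 + Y2 = I1 + I2"
    and "min I1 I2 \<le> Y1" and "Y1 \<le> max I1 I2"
    and "I2 \<le> I1 \<Longrightarrow> Y1 = I2 \<or> Y1 mod int L = I1 mod int L"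
proof (cases "x = ipair b1 b2 I1 I2")
  case True
  then show thesis using that by simp
next
  case False
  obtain X where X: "fsupp X" "zdiff X = cT_num (bv (ipair b1 b2 I1 I2))"
    and "cT N L (bv (ipair b1 b2 I1 I2)) = vsub X (bv (ipair b1 b2 I1 I2))"
    by (rule cT_bv_eq)
  then have "X x \<noteq> 0" using assms False by (simp add: bv_def)
  then show thesis using quotient_support[OF X] that by blast
qed

lemma cT_bv_self_coeff_eq_0:
  assumes "I2 < I1"
  shows "cT N L (bv (ipair b1 b2 I1 I2)) (ipair b1 b2 I1 I2) = 0"
proof -
  obtain X where X: "fsupp X" "zdiff X = cT_num (bv (ipair b1 b2 I1 I2))"
    and cT: "cT N L (bv (ipair b1 b2 I1 I2)) = vsub X (bv (ipair b1 b2 I1 I2))"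
    by (rule cT_bv_eq)
  have "fst (dot_exchange I1 I2) \<noteq> I1 + int L"
    using dot_exchange_props(3)[of I1 I2] assms by simp
  then have "X (ipair b1 b2 I1 I2) = 1"
    using quotient_at_extreme[OF X] assms L_pos unfolding cT_num_bv by (simp add: bv_def max_def min_def)
  then show ?thesis using cT by (simp add: bv_def)
qed

lemma cT_bv_swapped_coeff_nonzero:
  assumes "I1 < I2"
  shows "cT N L (bv (ipair b1 b2 I1 I2)) (ipair b1 b2 I2 I1) \<noteq> 0"
proof -
  obtain X where X: "fsupp X" "zdiff X = cT_num (bv (ipair b1 b2 I1 I2))"
    and cT: "cT N L (bv (ipair b1 b2 I1 I2)) = vsub X (bv (ipair b1 b2 I1 I2))"
    by (rule cT_bv_eq)
  have "jdot L I1 \<noteq> jdot L I2 \<Longrightarrow> fst (dot_exchange I1 I2) \<noteq> I2 + int L"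
    using dot_exchange_props(4)[of I1 I2] by simp
  then have "X (ipair b1 b2 I2 I1) \<noteq> 0"
    using quotient_at_extreme[OF X] assms qq_pos L_pos unfolding cT_num_bv
    by (cases "jdot L I1 = jdot L I2") (simp_all add: bv_def max_def min_def)
  then show ?thesis using cT assms by (simp add: bv_def)
qed
end

section \<open>Reduction modulo the relations\<close>

text \<open>The relation space \<open>relIm\<close>, described through \<open>cT g = X - g\<close> so that it is visibly a
  subspace.\<close>

definition rels :: "vec set" where
  "rels = {vsub (vsub X g) (sT N L g) | g X. fsupp g \<and> fsupp X \<and> zdiff X = cT_num g}"

lemma rels_subset_relIm: "rels \<subseteq> relIm N L"
proof
  fix v assume "v \<in> rels"
  then obtain g X where "fsupp g" "fsupp X" "zdiff X = cT_num g" and v: "v = vsub (vsub X g) (sT N L g)"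
    unfolding rels_def by blast
  then have "v = vsub (cT N L g) (sT N L g)" using cT_eqI by simp
  then show "v \<in> relIm N L" unfolding relIm_def using \<open>fsupp g\<close> by blast
qed

lemma cT_num_vadd:
  assumes "fsupp f" and "fsupp g"
  shows "cT_num (vadd f g) = vadd (cT_num f) (cT_num g)"
proof -
  have RR: "RR N L (vadd f g) = vadd (RR N L f) (RR N L g)"
    unfolding RR_def using assms by (rule lin_vadd)
  show ?thesis
    using assms by (simp add: RR cT_num_def fun_eq_iff SS_apply Z1_apply Z2_apply algebra_simps)
qed

lemma cT_num_vsc:
  assumes "fsupp f"
  shows "cT_num (vsc a f) = vsc a (cT_num f)"
proof -
  have RR: "RR N L (vsc a f) = vsc a (RR N L f)"
    unfolding RR_def using assms by (rule lin_vsc)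
  show ?thesis
    using assms by (simp add: RR cT_num_def fun_eq_iff SS_apply Z1_apply Z2_apply algebra_simps)
qed

lemma rels_vadd:
  assumes "v \<in> rels" and "w \<in> rels"
  shows "vadd v w \<in> rels"
proof -
  obtain g X where g: "fsupp g" "fsupp X" "zdiff X = cT_num g" "v = vsub (vsub X g) (sT N L g)"
    using assms(1) unfolding rels_def by blast
  obtain h Y where h: "fsupp h" "fsupp Y" "zdiff Y = cT_num h" "w = vsub (vsub Y h) (sT N L h)"
    using assms(2) unfolding rels_def by blast
  have "zdiff (vadd X Y) = cT_num (vadd g h)"
    using g h by (simp add: zdiff_vadd cT_num_vadd)
  moreover have "vadd v w = vsub (vsub (vadd X Y) (vadd g h)) (sT N L (vadd g h))"
    unfolding g(4) h(4) sT_def by (simp add: lin_vadd[OF g(1) h(1)] fun_eq_iff)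
  ultimately show ?thesis
    unfolding rels_def using g h by (intro CollectI exI[of _ "vadd g h"] exI[of _ "vadd X Y"]) simp
qed

lemma rels_vsc:
  assumes "v \<in> rels"
  shows "vsc a v \<in> rels"
proof -
  obtain g X where g: "fsupp g" "fsupp X" "zdiff X = cT_num g" "v = vsub (vsub X g) (sT N L g)"
    using assms unfolding rels_def by blast
  have "zdiff (vsc a X) = cT_num (vsc a g)"
    using g by (simp add: zdiff_vsc cT_num_vsc)
  moreover have "vsc a v = vsub (vsub (vsc a X) (vsc a g)) (sT N L (vsc a g))"
    unfolding g(4) sT_def by (simp add: lin_vsc[OF g(1)] fun_eq_iff algebra_simps)
  ultimately show ?thesis
    unfolding rels_def using g by (intro CollectI exI[of _ "vsc a g"] exI[of _ "vsc a X"]) simp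
qed

lemma zero_in_rels: "(\<lambda>x. 0) \<in> rels"
proof -
  have "zdiff (\<lambda>x. 0) = cT_num (\<lambda>x. 0)"
    by (simp add: zdiff_def cT_num_def RR_def Z1_eq Z2_eq SS_eq vsub_def vadd_def vsc_def)
  then show ?thesis
    unfolding rels_def sT_def by (intro CollectI exI[of _ "\<lambda>x. 0"]) (simp add: vsub_def)
qed

lemma basis_relation_in_rels: "vsub (cT N L (bv p)) (sTb N L p) \<in> rels"
proof -
  obtain b1 b2 Y1 Y2 where b: "b1 \<in> {1..int N}" "b2 \<in> {1..int N}" and p: "p = ipair b1 b2 Y1 Y2"
    by (rule ipair_cases)
  obtain X where "fsupp X" "zdiff X = cT_num (bv p)" "cT N L (bv p) = vsub X (bv p)"
    using cT_bv_eq[of b1 b2 Y1 Y2] b unfolding p by auto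
  then show ?thesis
    unfolding rels_def sT_def by (intro CollectI exI[of _ "bv p"] exI[of _ X]) simp
qed

lemma sTb_same_colour:
  "1 \<le> b \<Longrightarrow> b \<le> int N \<Longrightarrow> sTb N L (ipair b b Y1 Y2) = vsc (qq N ^ 2) (bv (ipair b b Y1 Y2))"
  unfolding sTb_def Let_def by simp

lemma sTb_increasing_colours:
  "1 \<le> b1 \<Longrightarrow> b1 < b2 \<Longrightarrow> b2 \<le> int N \<Longrightarrow>
    sTb N L (ipair b1 b2 Y1 Y2) = vsc (qq N) (bv (ipair b2 b1 Y1 Y2))"
  unfolding sTb_def Let_def by simp

definition reduces :: "(int \<times> int) set \<Rightarrow> vec \<Rightarrow> bool" where
  "reduces G v \<longleftrightarrow> (\<exists>c. fsupp c \<and> {p. c p \<noteq> 0} \<subseteq> G \<and> vsub v c \<in> rels)"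

lemma reduces_rels: "v \<in> rels \<Longrightarrow> reduces G v"
  unfolding reduces_def by (intro exI[of _ "\<lambda>x. 0"]) (simp add: vsub_def)

lemma reduces_bv: "p \<in> G \<Longrightarrow> reduces G (bv p)"
  unfolding reduces_def
proof (intro exI[of _ "bv p"] conjI)
  show "vsub (bv p) (bv p) \<in> rels" using zero_in_rels by (simp add: vsub_def)
qed (auto simp: bv_apply)

lemma reduces_mono: "G \<subseteq> G' \<Longrightarrow> reduces G v \<Longrightarrow> reduces G' v"
  unfolding reduces_def by blast

lemma reduces_vadd: "reduces G v \<Longrightarrow> reduces G w \<Longrightarrow> reduces G (vadd v w)"
proof -
  assume "reduces G v" "reduces G w"
  then obtain c d where c: "fsupp c" "{p. c p \<noteq> 0} \<subseteq> G" "vsub v c \<in> rels"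
    and d: "fsupp d" "{p. d p \<noteq> 0} \<subseteq> G" "vsub w d \<in> rels"
    unfolding reduces_def by blast
  have "vsub (vadd v w) (vadd c d) = vadd (vsub v c) (vsub w d)"
    by (simp add: fun_eq_iff)
  moreover have "{p. vadd c d p \<noteq> 0} \<subseteq> {p. c p \<noteq> 0} \<union> {p. d p \<noteq> 0}"
    by auto
  ultimately show ?thesis
    unfolding reduces_def using c d rels_vadd[OF c(3) d(3)]
    by (intro exI[of _ "vadd c d"]) auto
qed

lemma reduces_vsc: "reduces G v \<Longrightarrow> reduces G (vsc a v)"
proof -
  assume "reduces G v"
  then obtain c where c: "fsupp c" "{p. c p \<noteq> 0} \<subseteq> G" "vsub v c \<in> rels"
    unfolding reduces_def by blast
  have "vsub (vsc a v) (vsc a c) = vsc a (vsub v c)"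
    by (simp add: fun_eq_iff algebra_simps)
  then show ?thesis
    unfolding reduces_def using c rels_vsc[OF c(3), of a]
    by (intro exI[of _ "vsc a c"]) auto
qed

lemma reduces_cong: "vsub v w \<in> rels \<Longrightarrow> reduces G w \<Longrightarrow> reduces G v"
proof -
  assume vw: "vsub v w \<in> rels" and "reduces G w"
  then obtain c where c: "fsupp c" "{p. c p \<noteq> 0} \<subseteq> G" "vsub w c \<in> rels"
    unfolding reduces_def by blast
  have "vsub v c = vadd (vsub v w) (vsub w c)"
    by (simp add: fun_eq_iff)
  then show ?thesis
    unfolding reduces_def using c rels_vadd[OF vw c(3)] by auto
qed

lemma reduces_sum:
  assumes "fsupp w" and "\<And>p. w p \<noteq> 0 \<Longrightarrow> reduces G (bv p)"
  shows "reduces G w"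
proof -
  have "reduces G v" if "finite S" "\<forall>p\<in>S. reduces G (bv p)" "{p. v p \<noteq> 0} \<subseteq> S" for S v
    using that
  proof (induction S arbitrary: v rule: finite_induct)
    case empty
    then have "v = (\<lambda>x. 0)" by auto
    then show ?case using reduces_rels[OF zero_in_rels] by simp
  next
    case (insert a S)
    have "{p. (v(a := 0)) p \<noteq> 0} \<subseteq> S" using insert.prems(2) by auto
    then have "reduces G (v(a := 0))" using insert.IH insert.prems(1) by blast
    moreover have "reduces G (vsc (v a) (bv a))" using insert.prems(1) reduces_vsc by blast
    ultimately have "reduces G (vadd (vsc (v a) (bv a)) (v(a := 0)))" by (rule reduces_vadd[rotated])
    moreover have "vadd (vsc (v a) (bv a)) (v(a := 0)) = v" by (simp add: fun_eq_iff bv_def)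
    ultimately show ?case by simp
  qed
  then show ?thesis using assms unfolding fsupp_def by blast
qed

lemma reduces_by_relation:
  assumes v: "v \<in> rels" "fsupp v" and x: "v x \<noteq> 0"
    and others: "\<And>z. z \<noteq> x \<Longrightarrow> v z \<noteq> 0 \<Longrightarrow> reduces G (bv z)"
  shows "reduces G (bv x)"
proof (rule reduces_cong)
  define R where "R = vsub v (vsc (v x) (bv x))"
  have "reduces G R"
  proof (rule reduces_sum)
    show "fsupp R" unfolding R_def using v(2) by simp
    show "reduces G (bv z)" if "R z \<noteq> 0" for z
      using that others unfolding R_def by (cases "z = x") (simp_all add: bv_apply)
  qed
  then show "reduces G (vsc (- inverse (v x)) R)" by (rule reduces_vsc)
  have "vsub (bv x) (vsc (- inverse (v x)) R) = vsc (inverse (v x)) v"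
    unfolding R_def using x by (simp add: fun_eq_iff field_simps)
  then show "vsub (bv x) (vsc (- inverse (v x)) R) \<in> rels"
    using rels_vsc[OF v(1)] by simp
qed

lemma fsupp_basis_relation: "fsupp (vsub (cT N L (bv p)) (sTb N L p))"
proof -
  obtain b1 b2 Y1 Y2 where "b1 \<in> {1..int N}" "b2 \<in> {1..int N}" and p: "p = ipair b1 b2 Y1 Y2"
    by (rule ipair_cases)
  then show ?thesis
    using fsupp_cT_bv[of b1 b2 Y1 Y2] unfolding sTb_def Let_def by simp
qed

section \<open>Straightening\<close>

definition staircase :: "(int \<Rightarrow> int) \<Rightarrow> int set" where
  "staircase J0 = {k. J0 (kbar N k) \<le> kt N k}"

definition ordered_above :: "(int \<Rightarrow> int) \<Rightarrow> int \<Rightarrow> (int \<times> int) set" where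
  "ordered_above J0 k = {(\<alpha>, \<beta>). \<beta> < \<alpha> \<and> k \<le> \<beta> \<and> \<beta> \<in> staircase J0}"

lemma idx_in_staircase_iff [simp]: "1 \<le> b \<Longrightarrow> b \<le> int N \<Longrightarrow> idx N b Y \<in> staircase J0 \<longleftrightarrow> J0 b \<le> Y"
  unfolding staircase_def by simp

lemma ordered_above_mono: "k \<le> k' \<Longrightarrow> ordered_above J0 k' \<subseteq> ordered_above J0 k"
  unfolding ordered_above_def by auto

definition straightening_upto :: "(int \<Rightarrow> int) \<Rightarrow> int \<Rightarrow> bool" where
  "straightening_upto J0 m \<longleftrightarrow> (\<forall>z. fst z \<le> snd z \<longrightarrow> fst z \<in> staircase J0 \<longrightarrow> snd z \<in> staircase J0 \<longrightarrow>
     kt N (fst z) - kt N (snd z) < m \<longrightarrow> reduces (ordered_above J0 (fst z)) (bv z))"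

lemma reduces_ordered_or_smaller:
  assumes "snd z \<in> staircase J0" and "k \<le> fst z" and "k \<le> snd z"
    and "fst z \<le> snd z \<Longrightarrow> reduces (ordered_above J0 (fst z)) (bv z)"
  shows "reduces (ordered_above J0 k) (bv z)"
proof (cases "snd z < fst z")
  case True
  then have "z \<in> ordered_above J0 k" using assms(1,3) unfolding ordered_above_def by auto
  then show ?thesis by (rule reduces_bv)
next
  case False
  then show ?thesis using assms(2,4) ordered_above_mono reduces_mono by (meson not_less)
qed

lemma straighten_same_colour:
  assumes b: "1 \<le> b" "b \<le> int N" and J: "J2 \<le> J1" "J0 b \<le> J2"
    and IH: "straightening_upto J0 (J1 - J2)"
  shows "reduces (ordered_above J0 (idx N b J1)) (bv (ipair b b J1 J2))"
proof -
  let ?p = "ipair b b J1 J2"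
  let ?v = "vsub (cT N L (bv ?p)) (sTb N L ?p)"
  have "?v ?p \<noteq> 0"
  proof (cases "J1 = J2")
    case True
    have "0 < 1 + qq N ^ 2" by (simp add: add_pos_nonneg)
    then show ?thesis
      unfolding True cT_bv_diag[OF b b] sTb_same_colour[OF b] by (simp add: bv_apply)
  next
    case False
    then show ?thesis
      using cT_bv_self_coeff_eq_0[OF b b, of J2 J1] J(1) qq_pos
      unfolding sTb_same_colour[OF b] by (simp add: bv_apply)
  qed
  then show ?thesis
  proof (rule reduces_by_relation[OF basis_relation_in_rels fsupp_basis_relation])
    fix z assume "z \<noteq> ?p" and "?v z \<noteq> 0"
    then have z: "cT N L (bv ?p) z \<noteq> 0" unfolding sTb_same_colour[OF b] by (simp add: bv_apply)
    obtain Y1 Y2 where zY: "z = ipair b b Y1 Y2" and "Y1 + Y2 = J1 + J2"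
      and "min J1 J2 \<le> Y1" "Y1 \<le> max J1 J2"
      by (rule cT_bv_support[OF b b z])
    then have Y: "Y1 + Y2 = J1 + J2" "J2 \<le> Y1" "Y1 < J1" using J(1) \<open>z \<noteq> ?p\<close> by auto
    show "reduces (ordered_above J0 (idx N b J1)) (bv z)"
    proof (rule reduces_ordered_or_smaller)
      assume "fst z \<le> snd z"
      then show "reduces (ordered_above J0 (fst z)) (bv z)"
        using IH Y J b unfolding straightening_upto_def zY ipair_def by auto
    qed (use Y J b in \<open>auto simp: zY ipair_def idx_le_idx_iff\<close>)
  qed
qed

lemma straighten_increasing_colours:
  assumes b: "1 \<le> lo" "lo < hi" "hi \<le> int N" and J: "J2 \<le> J1" "J0 lo \<le> J1" "J0 hi \<le> J2"
    and J0: "J0 lo \<le> J0 hi" and IH: "straightening_upto J0 (J1 - J2)"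
  shows "reduces (ordered_above J0 (idx N lo J1)) (bv (ipair lo hi J1 J2))"
proof -
  have lo: "1 \<le> lo" "lo \<le> int N" and hi: "1 \<le> hi" "hi \<le> int N" using b by auto
  let ?p = "ipair lo hi J1 J2" and ?p' = "ipair lo hi J2 J1" and ?y = "ipair hi lo J2 J1"
  let ?v = "vsub (cT N L (bv ?p')) (sTb N L ?p')"
  have "?y \<noteq> ?p" using ipair_colours_eq[OF hi lo lo hi] b by blast
  moreover have "cT N L (bv ?p') ?p \<noteq> 0"
    using cT_bv_diag[OF lo hi] cT_bv_swapped_coeff_nonzero[OF lo hi, of J2 J1] J(1)
    by (cases "J1 = J2") (simp_all add: bv_apply)
  ultimately have "?v ?p \<noteq> 0" unfolding sTb_increasing_colours[OF b] by (simp add: bv_apply)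
  then show ?thesis
  proof (rule reduces_by_relation[OF basis_relation_in_rels fsupp_basis_relation])
    fix z assume "z \<noteq> ?p" and v: "?v z \<noteq> 0"
    show "reduces (ordered_above J0 (idx N lo J1)) (bv z)"
    proof (cases "z = ?y")
      case True
      then show ?thesis
        by (intro reduces_bv) (use J lo hi b in \<open>auto simp: ordered_above_def ipair_def idx_less_idx_iff\<close>)
    next
      case False
      then have "cT N L (bv ?p') z \<noteq> 0" using v unfolding sTb_increasing_colours[OF b] by (simp add: bv_apply)
      then obtain Y1 Y2 where zY: "z = ipair lo hi Y1 Y2" and "Y1 + Y2 = J2 + J1"
        and "min J2 J1 \<le> Y1" "Y1 \<le> max J2 J1"
        by (rule cT_bv_support[OF lo hi])
      then have Y: "Y1 + Y2 = J1 + J2" "J2 \<le> Y1" "Y1 < J1" using J(1) \<open>z \<noteq> ?p\<close> by auto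
      show ?thesis
      proof (rule reduces_ordered_or_smaller)
        assume "fst z \<le> snd z"
        then show "reduces (ordered_above J0 (fst z)) (bv z)"
          using IH Y J J0 lo hi unfolding straightening_upto_def zY ipair_def by auto
      next
        show "snd z \<in> staircase J0" using Y J hi by (simp add: zY ipair_def)
        show "idx N lo J1 \<le> fst z" using Y lo by (simp add: zY ipair_def idx_le_idx_iff)
        show "idx N lo J1 \<le> snd z" using Y lo hi b by (simp add: zY ipair_def idx_le_idx_iff) arith
      qed
    qed
  qed
qed

lemma straighten_decreasing_colours:
  assumes b: "1 \<le> lo" "lo < hi" "hi \<le> int N" and J: "J2 < J1" "J0 hi \<le> J1" "J0 lo \<le> J2"
    and J0: "J0 hi \<le> J0 lo + int L" and IH: "straightening_upto J0 (J1 - J2)"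
  shows "reduces (ordered_above J0 (idx N hi J1)) (bv (ipair hi lo J1 J2))"
proof -
  have lo: "1 \<le> lo" "lo \<le> int N" and hi: "1 \<le> hi" "hi \<le> int N" using b by auto
  let ?p = "ipair hi lo J1 J2" and ?p' = "ipair lo hi J1 J2"
  let ?v = "vsub (cT N L (bv ?p')) (sTb N L ?p')"
  have "cT N L (bv ?p') ?p = 0"
  proof (rule ccontr)
    assume "cT N L (bv ?p') ?p \<noteq> 0"
    then obtain Y1 Y2 where "?p = ipair lo hi Y1 Y2" by (rule cT_bv_support[OF lo hi])
    then show False using ipair_colours_eq[OF hi lo lo hi] b by simp
  qed
  then have "?v ?p \<noteq> 0"
    using qq_pos unfolding sTb_increasing_colours[OF b] by (simp add: bv_apply)
  then show ?thesis
  proof (rule reduces_by_relation[OF basis_relation_in_rels fsupp_basis_relation])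
    fix z assume "z \<noteq> ?p" and "?v z \<noteq> 0"
    then have z: "cT N L (bv ?p') z \<noteq> 0"
      unfolding sTb_increasing_colours[OF b] by (simp add: bv_apply)
    obtain Y1 Y2 where zY: "z = ipair lo hi Y1 Y2" and "Y1 + Y2 = J1 + J2"
      and "min J1 J2 \<le> Y1" "Y1 \<le> max J1 J2" and res: "Y1 = J2 \<or> Y1 mod int L = J1 mod int L"
      using cT_bv_support[OF lo hi z] J(1) by (metis less_imp_le)
    moreover have "Y1 \<noteq> J1"
      using z cT_bv_self_coeff_eq_0[OF lo hi J(1)] zY \<open>Y1 + Y2 = J1 + J2\<close> by auto
    ultimately have Y: "Y1 + Y2 = J1 + J2" "J2 \<le> Y1" "Y1 < J1" using J(1) by auto
    text \<open>Away from its first term, the levels of \<open>cT\<close> move in steps of \<open>L\<close>; this gap is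
      what keeps the colour \<open>hi\<close> above the staircase.\<close>
    have gap: "Y1 = J2 \<or> J2 + int L \<le> Y2"
      using res mod_eq_less_imp_le_diff[of Y1 "int L" J1] Y by auto
    show "reduces (ordered_above J0 (idx N hi J1)) (bv z)"
    proof (rule reduces_ordered_or_smaller)
      assume le: "fst z \<le> snd z"
      then have "Y2 \<le> Y1" using lo hi by (auto simp: zY ipair_def idx_le_idx_iff)
      then have "J2 + int L \<le> Y2" using gap Y by auto
      then show "reduces (ordered_above J0 (fst z)) (bv z)"
        using IH le Y J J0 lo hi unfolding straightening_upto_def zY ipair_def by auto
    next
      show "snd z \<in> staircase J0" using Y J J0 gap hi by (auto simp: zY ipair_def)
      show "idx N hi J1 \<le> fst z" using Y lo hi by (simp add: zY ipair_def idx_le_idx_iff)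
      show "idx N hi J1 \<le> snd z" using Y hi by (simp add: zY ipair_def idx_le_idx_iff) arith
    qed
  qed
qed

lemma straightening_upto_0: "straightening_upto J0 0"
  unfolding straightening_upto_def
proof (intro allI impI)
  fix z :: "int \<times> int" assume "fst z \<le> snd z" and "kt N (fst z) - kt N (snd z) < 0"
  moreover obtain b1 b2 J1 J2 where "b1 \<in> {1..int N}" "b2 \<in> {1..int N}" "z = ipair b1 b2 J1 J2"
    by (rule ipair_cases)
  ultimately show "reduces (ordered_above J0 (fst z)) (bv z)"
    by (auto simp: ipair_def idx_le_idx_iff)
qed

lemma straightening_upto_Suc:
  assumes J0: "\<And>x y. 1 \<le> x \<Longrightarrow> x \<le> y \<Longrightarrow> y \<le> int N \<Longrightarrow> J0 x \<le> J0 y \<and> J0 y \<le> J0 x + int L"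
    and IH: "straightening_upto J0 m"
  shows "straightening_upto J0 (m + 1)"
  unfolding straightening_upto_def
proof (intro allI impI)
  fix z :: "int \<times> int"
  assume le: "fst z \<le> snd z" and st: "fst z \<in> staircase J0" "snd z \<in> staircase J0"
    and lt: "kt N (fst z) - kt N (snd z) < m + 1"
  obtain b1 b2 J1 J2 where b: "b1 \<in> {1..int N}" "b2 \<in> {1..int N}" and z: "z = ipair b1 b2 J1 J2"
    by (rule ipair_cases)
  have J: "J2 \<le> J1" "J0 b1 \<le> J1" "J0 b2 \<le> J2" "J1 - J2 \<le> m"
    using le st lt b by (auto simp: z ipair_def idx_le_idx_iff)
  show "reduces (ordered_above J0 (fst z)) (bv z)"
  proof (cases "J1 - J2 < m")
    case True
    then show ?thesis using IH le st b unfolding straightening_upto_def z ipair_def by auto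
  next
    case False
    then have IH: "straightening_upto J0 (J1 - J2)" using IH J(4) by simp
    consider "b1 = b2" | "b1 < b2" | "b2 < b1" by linarith
    then show ?thesis
    proof cases
      case 1
      then show ?thesis
        using straighten_same_colour[of b1 J2 J1 J0] J b IH unfolding z ipair_def by auto
    next
      case 2
      then show ?thesis
        using straighten_increasing_colours[of b1 b2 J2 J1 J0] J0[of b1 b2] J b IH
        unfolding z ipair_def by auto
    next
      case 3
      then have "J2 < J1" using le b by (auto simp: z ipair_def idx_le_idx_iff)
      then show ?thesis
        using straighten_decreasing_colours[of b2 b1 J2 J1 J0] J0[of b2 b1] J b IH 3
        unfolding z ipair_def by auto
    qed
  qed
qed

theorem straighten:
  assumes J0: "\<And>x y. 1 \<le> x \<Longrightarrow> x \<le> y \<Longrightarrow> y \<le> int N \<Longrightarrow> J0 x \<le> J0 y \<and> J0 y \<le> J0 x + int L"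
    and "k1 \<le> k2" and "k1 \<in> staircase J0" and "k2 \<in> staircase J0"
  shows "reduces (ordered_above J0 k1) (bv (k1, k2))"
proof -
  have "straightening_upto J0 (int n)" for n
  proof (induction n)
    case (Suc n)
    then show ?case using straightening_upto_Suc[OF J0 Suc] by (simp add: add.commute)
  qed (simp add: straightening_upto_0)
  from this[of "nat (kt N k1 - kt N k2) + 1"] show ?thesis
    using assms(2-4) unfolding straightening_upto_def by auto
qed

end

section \<open>The Young diagram of \<open>\<Lambda>\<close>\<close>

lemma sum_suffix_sums:
  fixes f :: "nat \<Rightarrow> int"
  shows "(\<Sum>k\<in>{1..n}. \<Sum>j\<in>{k..<n}. f j) = (\<Sum>j\<in>{1..<n}. int j * f j)"
proof (induction n)
  case 0 then show ?case by simp
next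
  case (Suc n)
  have "(\<Sum>k\<in>{1..Suc n}. \<Sum>j\<in>{k..<Suc n}. f j) =
        (\<Sum>k\<in>{1..n}. \<Sum>j\<in>{k..<Suc n}. f j) + (\<Sum>j\<in>{Suc n..<Suc n}. f j)"
    by simp
  also have "\<dots> = (\<Sum>k\<in>{1..n}. \<Sum>j\<in>{k..<Suc n}. f j)" by simp
  also have "\<dots> = (\<Sum>k\<in>{1..n}. (\<Sum>j\<in>{k..<n}. f j) + f n)"
    by (intro sum.cong refl) (simp add: sum.atLeastLessThan_Suc)
  also have "\<dots> = (\<Sum>k\<in>{1..n}. \<Sum>j\<in>{k..<n}. f j) + int n * f n"
    by (simp add: sum.distrib)
  also have "\<dots> = (\<Sum>j\<in>{1..<Suc n}. int j * f j)"
    using Suc by (cases n) (simp_all add: atLeastLessThanSuc)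
  finally show ?case .
qed

locale young_diagram =
  fixes N L :: nat and M :: int and a :: "nat \<Rightarrow> nat"
  assumes N_ge_2: "2 \<le> N" and L_ge_2: "2 \<le> L"
    and sum_a: "(\<Sum>i<N. a i) = L"
    and weight_cong: "(\<Sum>i=1..<N. int (i * a i)) mod int N = M mod int N"
begin

sublocale fock N L
  using N_ge_2 L_ge_2 by unfold_locales auto

text \<open>Box \<open>(x, y)\<close> carries the index \<open>idx N x (box_level y)\<close>; \<open>profile x\<close> is the level of the
  top box of column \<open>x\<close>.\<close>

definition box_level :: "int \<Rightarrow> int" where
  "box_level y = int L + 1 - y - int L * (M div (int N * int L))"

definition profile :: "int \<Rightarrow> int" where
  "profile x = box_level (lcol N L M a x)"

abbreviation diagram_size :: int where
  "diagram_size \<equiv> sres N L M + int N * int L"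

lemma M_eq: "M = int N * int L * (M div (int N * int L)) + sres N L M"
  unfolding sres_def by simp

lemma sres_bounds: "0 \<le> sres N L M" "sres N L M < int N * int L"
  unfolding sres_def using N_pos L_pos by auto

lemma weighted_sum_le: "(\<Sum>j=1..<N. int (j * a j)) \<le> int (N - 1) * int L"
proof -
  have "(\<Sum>j=1..<N. int (j * a j)) \<le> (\<Sum>j=1..<N. int (N - 1) * int (a j))"
    by (intro sum_mono) (auto intro: mult_right_mono)
  also have "\<dots> = int (N - 1) * (\<Sum>j=1..<N. int (a j))"
    by (simp add: sum_distrib_left)
  also have "\<dots> \<le> int (N - 1) * (\<Sum>j<N. int (a j))"
    by (intro mult_left_mono sum_mono2) auto
  also have "(\<Sum>j<N. int (a j)) = int L"
    using sum_a by (metis of_nat_sum)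
  finally show ?thesis .
qed

lemma lN_props:
  "int N * lN N L M a = diagram_size - (\<Sum>j=1..<N. int (j * a j))" "0 \<le> lN N L M a"
proof -
  let ?num = "diagram_size - (\<Sum>j=1..<N. int (j * a j))"
  have "sres N L M mod int N = M mod int N"
    unfolding sres_def by (simp add: mod_mod_cancel)
  then have "sres N L M mod int N = (\<Sum>j=1..<N. int (j * a j)) mod int N"
    using weight_cong by simp
  then have "int N dvd sres N L M - (\<Sum>j=1..<N. int (j * a j))"
    by (rule mod_eq_dvd_iff[THEN iffD1])
  then have "int N dvd (sres N L M - (\<Sum>j=1..<N. int (j * a j))) + int N * int L"
    by simp
  then have "int N dvd ?num" by (simp add: algebra_simps)
  then show "int N * lN N L M a = ?num" unfolding lN_def by simp
  have "int (N - 1) * int L \<le> int N * int L" by (intro mult_right_mono) auto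
  then have "0 \<le> ?num" using weighted_sum_le sres_bounds by linarith
  then show "0 \<le> lN N L M a" unfolding lN_def using N_pos by (intro div_int_pos_iff[THEN iffD2]) auto
qed

lemma lcol_nonneg: "0 \<le> lcol N L M a x"
  unfolding lcol_def using lN_props(2) by (simp add: sum_nonneg)

lemma boxes_Sigma: "boxes N L M a = Sigma {1..int N} (\<lambda>x. {1..lcol N L M a x})"
  unfolding boxes_def by auto

lemma finite_boxes: "finite (boxes N L M a)"
  unfolding boxes_Sigma by auto

lemma card_boxes: "int (card (boxes N L M a)) = diagram_size"
proof -
  have "int (card (boxes N L M a)) = (\<Sum>x\<in>{1..int N}. lcol N L M a x)"
    unfolding boxes_Sigma using lcol_nonneg by (simp add: card_SigmaI)
  also have "\<dots> = (\<Sum>k\<in>{1..N}. lcol N L M a (int k))"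
  proof -
    have "x \<in> int ` {1..N}" if "x \<in> {1..int N}" for x
      using that by (intro image_eqI[of _ _ "nat x"]) auto
    then have "{1..int N} = int ` {1..N}" by auto
    then show ?thesis by (simp add: sum.reindex)
  qed
  also have "\<dots> = int N * lN N L M a + (\<Sum>k\<in>{1..N}. \<Sum>j\<in>{k..<N}. int (a j))"
    unfolding lcol_def by (simp add: sum.distrib)
  also have "\<dots> = diagram_size"
    using lN_props(1) sum_suffix_sums[of "\<lambda>j. int (a j)" N] by simp
  finally show ?thesis .
qed

definition box_idx :: "int \<times> int \<Rightarrow> int" where
  "box_idx b = idx N (fst b) (box_level (snd b))"

lemma kseq_box_formula: "fst b + int N * (snd b - int L - 1) + M - sres N L M = box_idx b"
proof -
  define w where "w = M div (int N * int L)"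
  have "int N * (snd b - int L - 1) = - int N * (int L + 1 - snd b - int L * w) - int N * int L * w"
    by (simp add: algebra_simps)
  then show ?thesis
    unfolding box_idx_def box_level_def idx_def w_def[symmetric] using M_eq[folded w_def] by linarith
qed

lemma box_colour: "b \<in> boxes N L M a \<Longrightarrow> 1 \<le> fst b \<and> fst b \<le> int N"
  unfolding boxes_def by auto

lemma box_idx_less_iff:
  assumes "b \<in> boxes N L M a" and "b' \<in> boxes N L M a"
  shows "box_idx b < box_idx b' \<longleftrightarrow> snd b < snd b' \<or> (snd b = snd b' \<and> fst b < fst b')"
  using idx_less_idx_iff box_colour[OF assms(1)] box_colour[OF assms(2)]
  by (auto simp: box_idx_def box_level_def)

lemma box_idx_inj: "inj_on box_idx (boxes N L M a)"
proof (rule inj_onI)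
  fix b b' assume "b \<in> boxes N L M a" "b' \<in> boxes N L M a" "box_idx b = box_idx b'"
  then show "b = b'" using box_idx_less_iff[of b b'] box_idx_less_iff[of b' b]
    by (auto simp: prod_eq_iff)
qed

lemma boxnum_eq:
  assumes "b \<in> boxes N L M a"
  shows "boxnum N L M a b = card {b' \<in> boxes N L M a. box_idx b < box_idx b'} + 1"
proof -
  let ?B = "boxes N L M a"
  have "{b' \<in> ?B. box_idx b < box_idx b'} =
      {b' \<in> ?B. snd b' > snd b} \<union> {b' \<in> ?B. snd b' = snd b \<and> fst b' > fst b}"
    using box_idx_less_iff[OF assms] by auto
  moreover have "card ({b' \<in> ?B. snd b' > snd b} \<union> {b' \<in> ?B. snd b' = snd b \<and> fst b' > fst b}) =
      card {b' \<in> ?B. snd b' > snd b} + card {b' \<in> ?B. snd b' = snd b \<and> fst b' > fst b}"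
    by (rule card_Un_disjoint) (use finite_boxes in auto)
  ultimately show ?thesis unfolding boxnum_def by simp
qed

lemma boxnum_less_iff:
  assumes b: "b \<in> boxes N L M a" and b': "b' \<in> boxes N L M a"
  shows "boxnum N L M a b' < boxnum N L M a b \<longleftrightarrow> box_idx b < box_idx b'"
proof -
  let ?up = "\<lambda>b. {c \<in> boxes N L M a. box_idx b < box_idx c}"
  have less: "boxnum N L M a b' < boxnum N L M a b" if "box_idx b < box_idx b'" "b \<in> boxes N L M a"
    "b' \<in> boxes N L M a" for b b'
  proof -
    have "?up b' \<subset> ?up b" using that by auto
    then have "card (?up b') < card (?up b)" by (rule psubset_card_mono[rotated]) (use finite_boxes in auto)
    then show ?thesis using boxnum_eq that(2,3) by simp
  qed
  show ?thesis
  proof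
    assume "boxnum N L M a b' < boxnum N L M a b"
    then show "box_idx b < box_idx b'"
      using less[OF _ b' b] box_idx_inj b b' unfolding inj_on_def
      by (metis less_irrefl linorder_neqE_linordered_idom order.asym)
  qed (rule less[OF _ b b'])
qed

lemma boxnum_bij: "bij_betw (boxnum N L M a) (boxes N L M a) {1..card (boxes N L M a)}"
proof -
  let ?B = "boxes N L M a"
  have inj: "inj_on (boxnum N L M a) ?B"
    by (rule inj_onI) (metis boxnum_less_iff box_idx_inj inj_on_def linorder_neqE_linordered_idom less_irrefl)
  have "boxnum N L M a b \<le> card ?B" if "b \<in> ?B" for b
  proof -
    have "{b' \<in> ?B. box_idx b < box_idx b'} \<subseteq> ?B - {b}" by auto
    then have "card {b' \<in> ?B. box_idx b < box_idx b'} \<le> card ?B - 1"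
      using card_mono[OF _ \<open>{b' \<in> ?B. box_idx b < box_idx b'} \<subseteq> ?B - {b}\<close>] finite_boxes that by simp
    moreover have "card ?B \<ge> 1" using that finite_boxes by (metis One_nat_def Suc_leI card_gt_0_iff empty_iff)
    ultimately show ?thesis using boxnum_eq[OF that] by simp
  qed
  then have "boxnum N L M a ` ?B \<subseteq> {1..card ?B}" by (auto simp: boxnum_def)
  moreover have "card (boxnum N L M a ` ?B) = card ?B" using card_image[OF inj] .
  ultimately have "boxnum N L M a ` ?B = {1..card ?B}" by (intro card_subset_eq) auto
  then show ?thesis unfolding bij_betw_def using inj by simp
qed

lemma kseq_box:
  assumes "1 \<le> i" and "int i \<le> diagram_size"
  obtains b where "b \<in> boxes N L M a" and "boxnum N L M a b = i" and "kseq N L M a i = box_idx b"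
proof -
  let ?B = "boxes N L M a"
  have "i \<in> {1..card ?B}" using assms card_boxes by simp
  then obtain b where b: "b \<in> ?B" "boxnum N L M a b = i"
    using boxnum_bij unfolding bij_betw_def by (metis imageE)
  have "(THE b. b \<in> ?B \<and> boxnum N L M a b = i) = b"
    using b boxnum_bij unfolding bij_betw_def inj_on_def by blast
  then have "kseq N L M a i = box_idx b"
    unfolding kseq_def using assms by (simp add: kseq_box_formula)
  then show thesis using that b by blast
qed

lemma kseq_tail: "diagram_size < int i \<Longrightarrow> kseq N L M a i = M - int i + 1"
  unfolding kseq_def by simp

lemma box_idx_gt: "b \<in> boxes N L M a \<Longrightarrow> M - diagram_size < box_idx b"
proof -
  assume "b \<in> boxes N L M a"
  then have "1 \<le> fst b" "int N * 1 \<le> int N * snd b" unfolding boxes_def by auto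
  then show ?thesis using kseq_box_formula[of b] by (simp add: algebra_simps)
qed

lemma kseq_strict_decreasing:
  assumes "1 \<le> m" and "m < l"
  shows "kseq N L M a l < kseq N L M a m"
proof (cases "int l \<le> diagram_size")
  case True
  obtain b where b: "b \<in> boxes N L M a" "boxnum N L M a b = l" "kseq N L M a l = box_idx b"
    using kseq_box[of l] True assms by auto
  obtain b' where b': "b' \<in> boxes N L M a" "boxnum N L M a b' = m" "kseq N L M a m = box_idx b'"
    using kseq_box[of m] True assms by auto
  show ?thesis using boxnum_less_iff[OF b(1) b'(1)] b b' assms(2) by simp
next
  case False
  then have l: "kseq N L M a l = M - int l + 1" by (simp add: kseq_tail)
  show ?thesis
  proof (cases "int m \<le> diagram_size")
    case True
    then obtain b' where "b' \<in> boxes N L M a" "kseq N L M a m = box_idx b'"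
      using kseq_box[of m] assms(1) by metis
    then have "M - diagram_size < kseq N L M a m" using box_idx_gt by simp
    then show ?thesis using l \<open>\<not> int l \<le> diagram_size\<close> by simp
  next
    case False
    then show ?thesis using l kseq_tail assms(2) by simp
  qed
qed

lemma profile_le_box_level:
  "1 \<le> x \<Longrightarrow> x \<le> int N \<Longrightarrow> (x, y) \<in> boxes N L M a \<longleftrightarrow> 1 \<le> y \<and> profile x \<le> box_level y"
  unfolding boxes_def profile_def box_level_def by auto

lemma kseq_in_staircase:
  assumes "1 \<le> i"
  shows "kseq N L M a i \<in> staircase profile"
proof (cases "int i \<le> diagram_size")
  case True
  then obtain b where b: "b \<in> boxes N L M a" "kseq N L M a i = box_idx b"
    using kseq_box[of i] assms by metis
  then show ?thesis
    using box_colour[OF b(1)] profile_le_box_level[of "fst b" "snd b"] by (simp add: box_idx_def)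
next
  case False
  let ?k = "kseq N L M a i"
  have "?k \<le> int N * int L * (M div (int N * int L)) - int N * int L"
    using False kseq_tail M_eq by simp
  moreover have "1 \<le> kbar N ?k" "?k = kbar N ?k - int N * kt N ?k"
    using kbar_bounds[OF N_pos, of ?k] idx_kbar_kt[OF N_pos, of ?k] unfolding idx_def by auto
  ultimately have "int N * (int L * (1 - M div (int N * int L))) < int N * kt N ?k"
    by (simp add: algebra_simps)
  then have "int L * (1 - M div (int N * int L)) < kt N ?k"
    using N_pos mult_less_cancel_left_pos[of "int N"] by simp
  then have "int L - int L * (M div (int N * int L)) < kt N ?k"
    by (simp add: algebra_simps)
  then show ?thesis
    using lcol_nonneg[of "kbar N ?k"] unfolding staircase_def profile_def box_level_def by simp
qed

lemma staircase_in_kseq: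
  assumes "\<beta> \<in> staircase profile"
  obtains i where "1 \<le> i" and "kseq N L M a i = \<beta>"
proof -
  define b J where "b = kbar N \<beta>" and "J = kt N \<beta>"
  have b: "1 \<le> b" "b \<le> int N" using kbar_bounds[OF N_pos] unfolding b_def by auto
  have \<beta>: "\<beta> = idx N b J" unfolding b_def J_def using idx_kbar_kt[OF N_pos] by simp
  have J: "profile b \<le> J" using assms unfolding staircase_def b_def J_def by simp
  show thesis
  proof (cases "box_level 1 < J")
    case True
    then have "int N * (box_level 1 + 1) \<le> int N * J" by (intro mult_left_mono) auto
    then have "\<beta> \<le> int N * int L * (M div (int N * int L)) - int N * int L"
      using b unfolding \<beta> idx_def box_level_def by (simp add: algebra_simps)
    then have "diagram_size < M - \<beta> + 1" and "kseq N L M a (nat (M - \<beta> + 1)) = \<beta>"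
      using M_eq sres_bounds kseq_tail[of "nat (M - \<beta> + 1)"] by simp_all
    then show thesis using that[of "nat (M - \<beta> + 1)"] sres_bounds by simp
  next
    case False
    define y where "y = box_level 0 - J"
    have box: "(b, y) \<in> boxes N L M a"
      using False J b profile_le_box_level[of b y] unfolding y_def box_level_def by simp
    define i where "i = boxnum N L M a (b, y)"
    have "i \<in> {1..card (boxes N L M a)}"
      using boxnum_bij box unfolding bij_betw_def i_def by blast
    then have i: "1 \<le> i" "int i \<le> diagram_size"
      using card_boxes by auto
    obtain b' where "b' \<in> boxes N L M a" "boxnum N L M a b' = i" "kseq N L M a i = box_idx b'"
      by (rule kseq_box[OF i])
    moreover have "box_idx (b, y) = \<beta>" unfolding box_idx_def \<beta> y_def box_level_def by simp
    ultimately show thesis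
      using that[OF i(1)] boxnum_bij box unfolding bij_betw_def inj_on_def i_def by metis
  qed
qed

lemma profile_slowly_increasing:
  assumes "1 \<le> x" "x \<le> y" "y \<le> int N"
  shows "profile x \<le> profile y \<and> profile y \<le> profile x + int L"
proof -
  have "{nat x..<N} = {nat x..<nat y} \<union> {nat y..<N}" using assms by auto
  then have "(\<Sum>j\<in>{nat x..<N}. int (a j)) = (\<Sum>j\<in>{nat x..<nat y}. int (a j)) + (\<Sum>j\<in>{nat y..<N}. int (a j))"
    by (simp add: sum.union_disjoint)
  moreover have "(\<Sum>j\<in>{nat x..<nat y}. int (a j)) \<le> (\<Sum>j<N. int (a j))"
    by (intro sum_mono2) (use assms in auto)
  moreover have "(\<Sum>j<N. int (a j)) = int L" using sum_a by (metis of_nat_sum)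
  moreover have "0 \<le> (\<Sum>j\<in>{nat x..<nat y}. int (a j))" by (simp add: sum_nonneg)
  ultimately show ?thesis unfolding profile_def box_level_def lcol_def by simp
qed

lemma kseq_pair_reduces:
  assumes "1 \<le> m" and "m < l"
  shows "reduces (ordered_above profile (kseq N L M a l)) (bv (kseq N L M a l, kseq N L M a m))"
  using straighten[OF profile_slowly_increasing] kseq_strict_decreasing[OF assms] kseq_in_staircase assms
  by simp

end

theorem mainTheorem8:
  fixes N L :: nat and M :: int and a :: "nat \<Rightarrow> nat" and l m :: nat
  assumes "2 \<le> N" and "2 \<le> L"
    and "(\<Sum>i<N. a i) = L"
    and "(\<Sum>i=1..<N. int (i * a i)) mod int N = M mod int N"
    and "1 \<le> m" and "m < l"
  shows "\<exists>c :: int \<times> int \<Rightarrow> K. finite {p. c p \<noteq> 0} \<and>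
     (\<forall>\<alpha> \<beta>. c (\<alpha>, \<beta>) \<noteq> 0 \<longrightarrow>
        \<alpha> > \<beta> \<and> (\<exists>l'\<ge>1. \<beta> = kseq N L M a l' \<and> kseq N L M a l' \<ge> kseq N L M a l)) \<and>
     vsub (bv (kseq N L M a l, kseq N L M a m)) (lin bv c) \<in> relIm N L"
proof -
  interpret young_diagram N L M a
    using assms(1-4) by unfold_locales
  obtain c where c: "fsupp c" "{p. c p \<noteq> 0} \<subseteq> ordered_above profile (kseq N L M a l)"
    and rel: "vsub (bv (kseq N L M a l, kseq N L M a m)) c \<in> rels"
    using kseq_pair_reduces[OF assms(5,6)] unfolding reduces_def by blast
  have "\<alpha> > \<beta> \<and> (\<exists>l'\<ge>1. \<beta> = kseq N L M a l' \<and> kseq N L M a l' \<ge> kseq N L M a l)"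
    if "c (\<alpha>, \<beta>) \<noteq> 0" for \<alpha> \<beta>
  proof -
    have "\<beta> < \<alpha>" "kseq N L M a l \<le> \<beta>" "\<beta> \<in> staircase profile"
      using c(2) that unfolding ordered_above_def by auto
    then show ?thesis using staircase_in_kseq by metis
  qed
  moreover have "vsub (bv (kseq N L M a l, kseq N L M a m)) (lin bv c) \<in> relIm N L"
    using rels_subset_relIm rel lin_bv_self[OF c(1)] by auto
  ultimately show ?thesis using c(1) unfolding fsupp_def by blast
qed

end
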